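(* Let $x=(x_1,\dots,x_n)$ be variables, $f=(f_1,\dots,f_n)$ differential-free terms such that the ODE $x'=f(x)$ locally evolves $x$ (in every state the value of $f$ is not the zero vector), $P$ a semianalytic formula, and $y=(y_1,\dots,y_n)$ variables fresh in $[x'=f(x)]P$. Then the formula $$[x'=f(x)]P\;\leftrightarrow\;\forall y\,[x'=f(x)\,\&\,P\vee x=y]\Big(x=y\rightarrow P\wedge\langle x'=f(x)\,\&\,P\vee x=y\rangle\, x\neq y\Big)$$ is valid.
   Context: Variables are real-valued; each variable $x$ has a differential variable $x'$. A state is a map from variables to $\mathbb{R}$. Terms are built from variables, rational constants, $+$, $\cdot$ and finitely many fixed function symbols interpreted as $C^\infty$ functions $\mathbb{R}^k\to\mathbb{R}$, evaluated as usual; differential-free terms contain no differential variables. Semianalytic formulas are built from comparisons $e\sim\tilde e$ ($\sim\in\{=,\ge,>\}$) of differential-free terms by $\wedge,\vee,\neg$. For vectors, $x=y$ abbreviates $\bigwedge_i x_i=y_i$, $x\neq y$ its negation, and $\forall y$ quantifies all $y_i$. Semantics of ODEs: $(\omega,\nu)\in[\![x'=f(x)\&Q]\!]$ iff there are $T\ge0$ and $\varphi:[0,T]\to$ states with $\varphi(0)=\omega$ on all variables except $x'$, $\varphi(T)=\nu$, and for all $\zeta\in[0,T]$: $\varphi(\zeta)$ satisfies $x'=f(x)\wedge Q$, $\varphi(\zeta)$ agrees with $\varphi(0)$ on variables other than $x,x'$, and, if $T>0$, $t\mapsto\varphi(t)(x)$ is differentiable at $\zeta$ with derivative $\varphi(\zeta)(x')$.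 $x'=f(x)$ without domain means $Q$ is true. $\omega\models[\alpha]\phi$ iff $\nu\models\phi$ for all $\nu$ with $(\omega,\nu)\in[\![\alpha]\!]$; $\omega\models\langle\alpha\rangle\phi$ iff $\nu\models\phi$ for some such $\nu$. A formula is valid if true in all states. *)

theory Defs
  imports "HOL-Analysis.Analysis"
begin

type_synonym ident = nat

text \<open>Each variable x has a differential variable x'. V x is x, D x is x'.\<close>
datatype var = V ident | D ident

type_synonym state = "var \<Rightarrow> real"

datatype trm = Var var | Const rat | Plus trm trm | Times trm trm | Fn nat "trm list"

datatype cmp = Eq | Geq | Gt

datatype fml = Cmp cmp trm trm | And fml fml | Or fml fml | Not fml

fun tsem :: "(nat \<Rightarrow> real list \<Rightarrow> real) \<Rightarrow> trm \<Rightarrow> state \<Rightarrow> real" where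
  "tsem I (Var v) s = s v"
| "tsem I (Const r) s = of_rat r"
| "tsem I (Plus a b) s = tsem I a s + tsem I b s"
| "tsem I (Times a b) s = tsem I a s * tsem I b s"
| "tsem I (Fn g ts) s = I g (map (\<lambda>t. tsem I t s) ts)"

fun csem :: "cmp \<Rightarrow> real \<Rightarrow> real \<Rightarrow> bool" where
  "csem Eq a b = (a = b)"
| "csem Geq a b = (a \<ge> b)"
| "csem Gt a b = (a > b)"

fun fsem :: "(nat \<Rightarrow> real list \<Rightarrow> real) \<Rightarrow> fml \<Rightarrow> state \<Rightarrow> bool" where
  "fsem I (Cmp c a b) s = csem c (tsem I a s) (tsem I b s)"
| "fsem I (And p q) s = (fsem I p s \<and> fsem I q s)"
| "fsem I (Or p q) s = (fsem I p s \<or> fsem I q s)"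
| "fsem I (Not p) s = (\<not> fsem I p s)"

fun wf_trm :: "(nat \<Rightarrow> nat) \<Rightarrow> trm \<Rightarrow> bool" where
  "wf_trm ar (Var v) = True"
| "wf_trm ar (Const r) = True"
| "wf_trm ar (Plus a b) = (wf_trm ar a \<and> wf_trm ar b)"
| "wf_trm ar (Times a b) = (wf_trm ar a \<and> wf_trm ar b)"
| "wf_trm ar (Fn g ts) = (length ts = ar g \<and> (\<forall>t\<in>set ts. wf_trm ar t))"

fun tvars :: "trm \<Rightarrow> var set" where
  "tvars (Var v) = {v}"
| "tvars (Const r) = {}"
| "tvars (Plus a b) = tvars a \<union> tvars b"
| "tvars (Times a b) = tvars a \<union> tvars b"
| "tvars (Fn g ts) = (\<Union>t\<in>set ts. tvars t)"

definition dfree :: "trm \<Rightarrow> bool" where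
  "dfree t \<longleftrightarrow> (\<forall>x. D x \<notin> tvars t)"

fun fterms :: "fml \<Rightarrow> trm set" where
  "fterms (Cmp c a b) = {a, b}"
| "fterms (And p q) = fterms p \<union> fterms q"
| "fterms (Or p q) = fterms p \<union> fterms q"
| "fterms (Not p) = fterms p"

definition fvars :: "fml \<Rightarrow> var set" where
  "fvars P = (\<Union>t\<in>fterms P. tvars t)"

definition semianalytic :: "(nat \<Rightarrow> nat) \<Rightarrow> fml \<Rightarrow> bool" where
  "semianalytic ar P \<longleftrightarrow> (\<forall>t\<in>fterms P. wf_trm ar t \<and> dfree t)"

definition partial :: "nat \<Rightarrow> (real list \<Rightarrow> real) \<Rightarrow> real list \<Rightarrow> real" where
  "partial i g xs = deriv (\<lambda>t. g (xs[i := t])) (xs ! i)"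

fun iter_partial :: "nat list \<Rightarrow> (real list \<Rightarrow> real) \<Rightarrow> real list \<Rightarrow> real" where
  "iter_partial [] g = g"
| "iter_partial (i # is) g = partial i (iter_partial is g)"

definition cont_list :: "nat \<Rightarrow> (real list \<Rightarrow> real) \<Rightarrow> bool" where
  "cont_list k g \<longleftrightarrow> (\<forall>xs. length xs = k \<longrightarrow>
     (\<forall>e>0. \<exists>d>0. \<forall>ys. length ys = k \<and> (\<forall>i<k. \<bar>ys ! i - xs ! i\<bar> < d) \<longrightarrow> \<bar>g ys - g xs\<bar> < e))"

definition smooth :: "nat \<Rightarrow> (real list \<Rightarrow> real) \<Rightarrow> bool" where
  "smooth k g \<longleftrightarrow> (\<forall>is. set is \<subseteq> {..<k} \<longrightarrow>
     cont_list k (iter_partial is g) \<and>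
     (\<forall>i<k. \<forall>xs. length xs = k \<longrightarrow>
        (\<lambda>t. iter_partial is g (xs[i := t])) differentiable (at (xs ! i))))"

text \<open>Transition relation of x' = f(x) & Q, where xs lists the variables x_i and fs the terms f_i.\<close>
definition ode_rel :: "(nat \<Rightarrow> real list \<Rightarrow> real) \<Rightarrow> ident list \<Rightarrow> trm list \<Rightarrow> (state \<Rightarrow> bool)
    \<Rightarrow> state \<Rightarrow> state \<Rightarrow> bool" where
  "ode_rel I xs fs Q \<omega> \<nu> \<longleftrightarrow>
    (\<exists>T\<ge>0. \<exists>\<phi> :: real \<Rightarrow> state.
       (\<forall>v. v \<notin> D ` set xs \<longrightarrow> \<phi> 0 v = \<omega> v) \<and> \<phi> T = \<nu> \<and>
       (\<forall>\<zeta>\<in>{0..T}.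
          (\<forall>i<length xs. \<phi> \<zeta> (D (xs ! i)) = tsem I (fs ! i) (\<phi> \<zeta>)) \<and> Q (\<phi> \<zeta>) \<and>
          (\<forall>v. v \<notin> V ` set xs \<and> v \<notin> D ` set xs \<longrightarrow> \<phi> \<zeta> v = \<phi> 0 v) \<and>
          (T > 0 \<longrightarrow> (\<forall>i<length xs.
              ((\<lambda>t. \<phi> t (V (xs ! i))) has_real_derivative \<phi> \<zeta> (D (xs ! i))) (at \<zeta> within {0..T})))))"

definition box :: "(state \<Rightarrow> state \<Rightarrow> bool) \<Rightarrow> (state \<Rightarrow> bool) \<Rightarrow> state \<Rightarrow> bool" where
  "box R \<phi> \<omega> \<longleftrightarrow> (\<forall>\<nu>. R \<omega> \<nu> \<longrightarrow> \<phi> \<nu>)"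

definition dia :: "(state \<Rightarrow> state \<Rightarrow> bool) \<Rightarrow> (state \<Rightarrow> bool) \<Rightarrow> state \<Rightarrow> bool" where
  "dia R \<phi> \<omega> \<longleftrightarrow> (\<exists>\<nu>. R \<omega> \<nu> \<and> \<phi> \<nu>)"

definition veq :: "ident list \<Rightarrow> ident list \<Rightarrow> state \<Rightarrow> bool" where
  "veq xs ys s \<longleftrightarrow> (\<forall>i<length xs. s (V (xs ! i)) = s (V (ys ! i)))"

end

theory Submission
  imports Defs
begin

text \<open>
  For \<open>\<Longrightarrow>\<close>: a run from a \<open>y\<close>-variant of \<open>\<omega>\<close> differs from a run from \<open>\<omega>\<close> only in the fresh
  \<open>y\<close>, so \<open>P\<close> holds at its end \<open>\<nu>\<close>.  There the solution can be continued, \<open>P\<close> persists along the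
  continuation, and as \<open>f(\<nu>) \<noteq> 0\<close> some \<open>x\<^sub>i\<close> moves at once while \<open>y\<^sub>i\<close> stays put, so \<open>x \<noteq> y\<close> is
  reached inside \<open>P\<close>.

  For \<open>\<Longleftarrow>\<close>: real induction along a run \<open>\<phi>\<close> from \<open>\<omega>\<close>.  If \<open>P\<close> holds on \<open>[0, t)\<close>, choose
  \<open>y := x(\<phi> t)\<close>; the run up to \<open>t\<close> stays in \<open>P \<or> x = y\<close> and ends on \<open>x = y\<close>, so the right-hand
  side gives \<open>P\<close> at \<open>\<phi> t\<close> and a run from there within \<open>P \<or> x = y\<close> that leaves \<open>x = y\<close>.  By
  uniqueness this run follows \<open>\<phi>\<close> for a while, and since \<open>x\<close> leaves the value \<open>y\<close> immediately,
  \<open>P\<close> holds on a right neighbourhood of \<open>t\<close>.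

  Existence and uniqueness of local solutions come from Picard--Lindel\<ouml>f and Gr\<ouml>nwall, since
  terms built from smooth functions are locally Lipschitz.
\<close>

lemma has_real_derivative_shift_within:
  fixes f :: "real \<Rightarrow> real"
  assumes "(f has_real_derivative f') (at (x + c) within {a + c..b + c})"
  shows "((\<lambda>s. f (s + c)) has_real_derivative f') (at x within {a..b})"
proof -
  have "((\<lambda>s. s + c) has_real_derivative 1) (at x within {a..b})"
    by (auto intro!: derivative_eq_intros)
  from DERIV_image_chain[OF _ this, of f f'] assms show ?thesis
    by (simp add: o_def)
qed

lemma has_real_derivative_within_Un:
  "(f has_real_derivative f') (at x within S) \<Longrightarrow> (f has_real_derivative f') (at x within T) \<Longrightarrow>
   (f has_real_derivative f') (at x within S \<union> T)"
  by (simp add: has_field_derivative_iff Lim_within_Un)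

lemma has_real_derivative_at_non_limpt:
  "\<not> x islimpt S \<Longrightarrow> (f has_real_derivative f') (at x within S)"
  by (metis has_field_derivative_bot trivial_limit_within)

lemma has_real_derivative_join:
  fixes f g :: "real \<Rightarrow> real"
  assumes "a \<le> b" "b \<le> c" "x \<in> {a..c}" "f b = g b"
    and f: "x \<le> b \<Longrightarrow> (f has_real_derivative f') (at x within {a..b})"
    and g: "b \<le> x \<Longrightarrow> (g has_real_derivative f') (at x within {b..c})"
  shows "((\<lambda>t. if t \<le> b then f t else g t) has_real_derivative f') (at x within {a..c})"
proof -
  have "{a..c} = {a..b} \<union> {b..c}" using assms by auto
  moreover have "((\<lambda>t. if t \<le> b then f t else g t) has_real_derivative f') (at x within {a..b})"
  proof (cases "x \<le> b")
    case True
    show ?thesis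
      by (rule has_field_derivative_transform_within[OF f[OF True] zero_less_one]) (use assms True in auto)
  qed (metis has_real_derivative_at_non_limpt closed_atLeastAtMost closed_limpt atLeastAtMost_iff)
  moreover have "((\<lambda>t. if t \<le> b then f t else g t) has_real_derivative f') (at x within {b..c})"
  proof (cases "b \<le> x")
    case True
    show ?thesis
      by (rule has_field_derivative_transform_within[OF g[OF True] zero_less_one]) (use assms True in auto)
  qed (metis has_real_derivative_at_non_limpt closed_atLeastAtMost closed_limpt atLeastAtMost_iff)
  ultimately show ?thesis by (simp add: has_real_derivative_within_Un)
qed

lemma gronwall_zero:
  fixes w w' :: "real \<Rightarrow> real"
  assumes der: "\<And>s. s \<in> {0..e} \<Longrightarrow> (w has_real_derivative w' s) (at s within {0..e})"
    and bound: "\<And>s. s \<in> {0..e} \<Longrightarrow> w' s \<le> C * w s"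
    and nonneg: "\<And>s. s \<in> {0..e} \<Longrightarrow> 0 \<le> w s"
    and "w 0 = 0" and s: "s \<in> {0..e}"
  shows "w s = 0"
proof -
  define g where "g t = exp (- C * t) * w t" for t
  define g' where "g' t = exp (- C * t) * (w' t - C * w t)" for t
  have g_deriv: "(g has_real_derivative g' t) (at t within {0..s})" if "t \<in> {0..s}" for t
  proof -
    have "(w has_real_derivative w' t) (at t within {0..s})"
      by (rule DERIV_subset[OF der]) (use that s in auto)
    then show ?thesis
      unfolding g_def g'_def by (auto intro!: derivative_eq_intros simp: algebra_simps)
  qed
  have "g s \<le> g 0"
  proof (cases "s = 0")
    case False
    then obtain t where t: "t \<in> {0<..<s}" and "g s - g 0 = g' t * (s - 0)"
      using mvt_simple[of 0 s g "\<lambda>t h. g' t * h"] g_deriv s by (auto simp: has_field_derivative_def)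
    moreover have "g' t \<le> 0"
      unfolding g'_def using bound[of t] t s by (auto intro: mult_nonneg_nonpos)
    ultimately show ?thesis using t mult_nonpos_nonneg[of "g' t" s] by auto
  qed simp
  then have "exp (- C * s) * w s \<le> 0" using \<open>w 0 = 0\<close> by (simp add: g_def)
  then show ?thesis using nonneg[OF s] by (simp add: mult_le_0_iff)
qed

lemma real_induction:
  fixes T :: real
  assumes step: "\<And>t. t \<in> {0..T} \<Longrightarrow> (\<And>r. r \<in> {0..<t} \<Longrightarrow> R r) \<Longrightarrow>
      R t \<and> (t < T \<longrightarrow> (\<exists>\<delta>>0. \<forall>r\<in>{t<..<t + \<delta>}. R r))"
    and t: "t \<in> {0..T}"
  shows "R t"
proof -
  define S where "S = {s \<in> {0..T}. \<forall>r\<in>{0..<s}. R r}"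
  have "0 \<in> S" unfolding S_def using t by auto
  have "bdd_above S" unfolding S_def by (rule bdd_aboveI[of _ T]) auto
  define m where "m = Sup S"
  have "0 \<le> m" unfolding m_def by (rule cSup_upper[OF \<open>0 \<in> S\<close> \<open>bdd_above S\<close>])
  moreover have "m \<le> T" unfolding m_def using \<open>0 \<in> S\<close> by (intro cSup_least) (auto simp: S_def)
  ultimately have m: "m \<in> {0..T}" by simp
  have below: "R r" if r: "r \<in> {0..<m}" for r
  proof -
    have "r < Sup S" using r by (simp add: m_def)
    then obtain s where "s \<in> S" "r < s" using less_cSup_iff[OF _ \<open>bdd_above S\<close>] \<open>0 \<in> S\<close> by blast
    then show ?thesis using r by (simp add: S_def)
  qed
  have Rm: "R m" and ext: "m < T \<Longrightarrow> \<exists>\<delta>>0. \<forall>r\<in>{m<..<m + \<delta>}. R r"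
    using step[OF m below] by blast+
  have "m = T"
  proof (rule ccontr)
    assume "m \<noteq> T"
    then have "m < T" using m by simp
    then obtain \<delta> where "\<delta> > 0" and \<delta>: "\<forall>r\<in>{m<..<m + \<delta>}. R r" using ext by blast
    define s where "s = min (m + \<delta>) T"
    have "R r" if "r \<in> {0..<s}" for r
    proof (cases r m rule: linorder_cases)
      case less
      then show ?thesis using below that by simp
    next
      case equal
      then show ?thesis using Rm by simp
    next
      case greater
      then show ?thesis using \<delta> that by (simp add: s_def)
    qed
    then have "s \<in> S" using m \<open>m < T\<close> \<open>\<delta> > 0\<close> by (auto simp: S_def s_def)
    then have "s \<le> m" using cSup_upper[OF _ \<open>bdd_above S\<close>] by (simp add: m_def)
    then show False using \<open>m < T\<close> \<open>\<delta> > 0\<close> by (simp add: s_def)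
  qed
  show ?thesis
  proof (cases "t = T")
    case False
    then show ?thesis using below t \<open>m = T\<close> by simp
  qed (use Rm \<open>m = T\<close> in simp)
qed

lemma finite_common_radius:
  fixes k :: nat
  assumes "\<forall>j<k. \<exists>d>0. P j d" and "\<And>j d d'. P j d \<Longrightarrow> 0 < d' \<Longrightarrow> d' \<le> d \<Longrightarrow> P j d'"
  shows "\<exists>d>0. \<forall>j<k. P j (d::real)"
  using assms(1)
proof (induction k)
  case (Suc k)
  then obtain d dk where "d > 0" "\<forall>j<k. P j d" "dk > 0" "P k dk" by (meson less_Suc_eq)
  then have "min d dk > 0" "\<forall>j<Suc k. P j (min d dk)"
    using assms(2) by (auto simp: less_Suc_eq)
  then show ?case by blast
qed (auto intro: exI[of _ 1])

lemma finite_common_bound: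
  fixes k :: nat
  assumes "\<forall>j<k. \<exists>L\<ge>0. P j L" and "\<And>j L L'. P j L \<Longrightarrow> L \<le> L' \<Longrightarrow> P j L'"
  shows "\<exists>L\<ge>0. \<forall>j<k. P j (L::real)"
  using assms(1)
proof (induction k)
  case (Suc k)
  then obtain L Lk where "L \<ge> 0" "\<forall>j<k. P j L" "Lk \<ge> 0" "P k Lk" by (meson less_Suc_eq)
  then have "max L Lk \<ge> 0" "\<forall>j<Suc k. P j (max L Lk)"
    using assms(2) by (auto simp: less_Suc_eq)
  then show ?case by blast
qed auto

subsection \<open>Smooth functions are locally Lipschitz\<close>

lemma smooth_has_real_derivative_coord:
  assumes "smooth k g" "length q = k" "i < k"
  shows "((\<lambda>t. g (q[i := t])) has_real_derivative partial i g (q[i := t])) (at t)"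
proof -
  have "(\<lambda>s. iter_partial [] g ((q[i := t])[i := s])) differentiable (at ((q[i := t]) ! i))"
    using assms unfolding smooth_def by (metis empty_set empty_subsetI length_list_update)
  then show ?thesis
    using assms by (simp add: partial_def DERIV_deriv_iff_real_differentiable)
qed

lemma smooth_cont_list_partial: "smooth k g \<Longrightarrow> i < k \<Longrightarrow> cont_list k (partial i g)"
  unfolding smooth_def
  by (metis empty_subsetI insert_subset iter_partial.simps lessThan_iff list.set)

lemma smooth_partial_bounded_near:
  assumes "smooth k g" "length p = k"
  shows "\<exists>d>0. \<exists>B. \<forall>q. length q = k \<longrightarrow> (\<forall>i<k. \<bar>q ! i - p ! i\<bar> < d) \<longrightarrow>
           (\<forall>j<k. \<bar>partial j g q\<bar> \<le> B)"
proof -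
  have "\<forall>j<k. \<exists>d>0. \<forall>q. length q = k \<and> (\<forall>i<k. \<bar>q ! i - p ! i\<bar> < d) \<longrightarrow>
          \<bar>partial j g q - partial j g p\<bar> < 1"
  proof (intro allI impI)
    fix j assume "j < k"
    then have "cont_list k (partial j g)" by (rule smooth_cont_list_partial[OF assms(1)])
    from this[unfolded cont_list_def, rule_format, OF assms(2), of 1]
    show "\<exists>d>0. \<forall>q. length q = k \<and> (\<forall>i<k. \<bar>q ! i - p ! i\<bar> < d) \<longrightarrow>
        \<bar>partial j g q - partial j g p\<bar> < 1"
      by simp
  qed
  then have "\<exists>d>0. \<forall>j<k. \<forall>q. length q = k \<and> (\<forall>i<k. \<bar>q ! i - p ! i\<bar> < d) \<longrightarrow>
          \<bar>partial j g q - partial j g p\<bar> < 1"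
    by (rule finite_common_radius) (use order_less_le_trans in fastforce)
  then obtain d where "d > 0" and d: "\<forall>j<k. \<forall>q. length q = k \<and> (\<forall>i<k. \<bar>q ! i - p ! i\<bar> < d) \<longrightarrow>
          \<bar>partial j g q - partial j g p\<bar> < 1"
    by blast
  define B where "B = (\<Sum>j<k. \<bar>partial j g p\<bar>) + 1"
  have "\<bar>partial j g q\<bar> \<le> B" if "length q = k" "\<forall>i<k. \<bar>q ! i - p ! i\<bar> < d" "j < k" for q j
  proof -
    have "\<bar>partial j g p\<bar> \<le> (\<Sum>j<k. \<bar>partial j g p\<bar>)"
      using that(3) by (intro member_le_sum) auto
    moreover have "\<bar>partial j g q - partial j g p\<bar> < 1" using d that by blast
    ultimately show ?thesis unfolding B_def by linarith
  qed
  then show ?thesis using \<open>d > 0\<close> by blast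
qed

lemma smooth_lipschitz_if_partials_bounded:
  assumes sm: "smooth k g" and q: "length q = k" and r: "length r = k"
    and bound: "\<And>s j. length s = k \<Longrightarrow> \<forall>i<k. s ! i \<in> closed_segment (q ! i) (r ! i) \<Longrightarrow> j < k \<Longrightarrow>
                  \<bar>partial j g s\<bar> \<le> B"
  shows "\<bar>g q - g r\<bar> \<le> B * (\<Sum>i<k. \<bar>q ! i - r ! i\<bar>)"
proof -
  define w where "w j = map (\<lambda>i. if i < j then r ! i else q ! i) [0..<k]" for j
  have len_w: "length (w j) = k" for j unfolding w_def by simp
  have step: "\<bar>g (w j) - g (w (Suc j))\<bar> \<le> B * \<bar>q ! j - r ! j\<bar>" if j: "j < k" for j
  proof -
    define S where "S = closed_segment (q ! j) (r ! j)"
    have "norm (g ((w j)[j := q ! j]) - g ((w j)[j := r ! j])) \<le> B * norm (q ! j - r ! j)"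
    proof (rule field_differentiable_bound[where S = S])
      fix t assume t: "t \<in> S"
      show "((\<lambda>t. g ((w j)[j := t])) has_real_derivative partial j g ((w j)[j := t])) (at t within S)"
        using smooth_has_real_derivative_coord[OF sm len_w j] by (rule has_field_derivative_at_within)
      have "\<forall>i<k. (w j)[j := t] ! i \<in> closed_segment (q ! i) (r ! i)"
        using t j unfolding S_def w_def by (auto simp: nth_list_update ends_in_segment)
      then show "norm (partial j g ((w j)[j := t])) \<le> B"
        using bound len_w j by simp
    qed (auto simp: S_def)
    moreover have "(w j)[j := q ! j] = w j" "(w j)[j := r ! j] = w (Suc j)"
      using j unfolding w_def by (auto intro!: nth_equalityI simp: nth_list_update)
    ultimately show ?thesis by simp
  qed
  have "\<bar>g q - g (w j)\<bar> \<le> B * (\<Sum>i<j. \<bar>q ! i - r ! i\<bar>)" if "j \<le> k" for j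
    using that
  proof (induction j)
    case 0
    have "w 0 = q" unfolding w_def using q by (auto intro: nth_equalityI)
    then show ?case by simp
  next
    case (Suc j)
    have "\<bar>g q - g (w (Suc j))\<bar> \<le> \<bar>g q - g (w j)\<bar> + \<bar>g (w j) - g (w (Suc j))\<bar>" by linarith
    also have "\<dots> \<le> B * (\<Sum>i<j. \<bar>q ! i - r ! i\<bar>) + B * \<bar>q ! j - r ! j\<bar>"
      using Suc step by (intro add_mono) auto
    finally show ?case by (simp add: algebra_simps)
  qed
  moreover have "w k = r" unfolding w_def using r by (auto intro: nth_equalityI)
  ultimately show ?thesis by (metis order_refl)
qed

lemma smooth_lipschitz_near:
  assumes sm: "smooth k g" and "length p = k"
  shows "\<exists>d>0. \<exists>K\<ge>0. \<forall>q r. length q = k \<longrightarrow> length r = k \<longrightarrow>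
           (\<forall>i<k. \<bar>q ! i - p ! i\<bar> < d) \<longrightarrow> (\<forall>i<k. \<bar>r ! i - p ! i\<bar> < d) \<longrightarrow>
           \<bar>g q - g r\<bar> \<le> K * (\<Sum>i<k. \<bar>q ! i - r ! i\<bar>)"
proof -
  obtain d B where "d > 0" and B: "\<forall>s. length s = k \<longrightarrow> (\<forall>i<k. \<bar>s ! i - p ! i\<bar> < d) \<longrightarrow>
      (\<forall>j<k. \<bar>partial j g s\<bar> \<le> B)"
    using smooth_partial_bounded_near[OF assms] by blast
  have "\<bar>g q - g r\<bar> \<le> max B 0 * (\<Sum>i<k. \<bar>q ! i - r ! i\<bar>)"
    if "length q = k" "length r = k" "\<forall>i<k. \<bar>q ! i - p ! i\<bar> < d" "\<forall>i<k. \<bar>r ! i - p ! i\<bar> < d" for q r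
  proof (rule smooth_lipschitz_if_partials_bounded[OF sm that(1,2)])
    fix s j assume s: "length s = k" "\<forall>i<k. s ! i \<in> closed_segment (q ! i) (r ! i)" and "j < k"
    have "\<bar>s ! i - p ! i\<bar> < d" if "i < k" for i
    proof -
      have "s ! i \<in> closed_segment (q ! i) (r ! i)" "\<bar>q ! i - p ! i\<bar> < d" "\<bar>r ! i - p ! i\<bar> < d"
        using s(2) \<open>i < k\<close> \<open>\<forall>i<k. \<bar>q ! i - p ! i\<bar> < d\<close> \<open>\<forall>i<k. \<bar>r ! i - p ! i\<bar> < d\<close> by auto
      then show ?thesis by (auto simp: closed_segment_eq_real_ivl split: if_split_asm)
    qed
    then show "\<bar>partial j g s\<bar> \<le> max B 0" using B s(1) \<open>j < k\<close> by fastforce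
  qed
  then show ?thesis
    using \<open>d > 0\<close> by (intro exI[of _ d] conjI exI[of _ "max B 0"] allI impI) auto
qed

definition max_dist :: "nat \<Rightarrow> (nat \<Rightarrow> real) \<Rightarrow> (nat \<Rightarrow> real) \<Rightarrow> real" where
  "max_dist n z w = Max (insert 0 ((\<lambda>i. \<bar>z i - w i\<bar>) ` {..<n}))"

lemma max_dist_ge: "i < n \<Longrightarrow> \<bar>z i - w i\<bar> \<le> max_dist n z w"
  unfolding max_dist_def by (rule Max_ge) auto

lemma max_dist_nonneg: "0 \<le> max_dist n z w"
  unfolding max_dist_def by (rule Max_ge) auto

lemma max_dist_le: "0 \<le> B \<Longrightarrow> (\<And>i. i < n \<Longrightarrow> \<bar>z i - w i\<bar> \<le> B) \<Longrightarrow> max_dist n z w \<le> B"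
  unfolding max_dist_def by (subst Max_le_iff) auto

lemma max_dist_self [simp]: "max_dist n z z = 0"
  using max_dist_le[of 0 n z z] max_dist_nonneg[of n z z] by simp

lemma max_dist_cong:
  "(\<And>i. i < n \<Longrightarrow> z i = z' i) \<Longrightarrow> (\<And>i. i < n \<Longrightarrow> w i = w' i) \<Longrightarrow> max_dist n z w = max_dist n z' w'"
  unfolding max_dist_def by (intro arg_cong[where f = Max] arg_cong[where f = "insert 0"] image_cong) auto

lemma V_notin_D_image [simp]: "V x \<notin> D ` S"
  by auto

definition assign :: "var list \<Rightarrow> (nat \<Rightarrow> real) \<Rightarrow> state \<Rightarrow> state" where
  "assign vs z \<nu> v = (if v \<in> set vs then z (LEAST i. vs ! i = v) else \<nu> v)"

lemma assign_nth:
  assumes "distinct vs" "i < length vs"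
  shows "assign vs z \<nu> (vs ! i) = z i"
proof -
  have "i \<le> j" if "vs ! j = vs ! i" for j
  proof (rule ccontr)
    assume "\<not> i \<le> j"
    then show False using that assms nth_eq_iff_index_eq[OF assms(1), of j i] by simp
  qed
  then have "(LEAST j. vs ! j = vs ! i) = i" by (intro Least_equality) auto
  then show ?thesis using assms(2) by (simp add: assign_def)
qed

lemma assign_notin: "v \<notin> set vs \<Longrightarrow> assign vs z \<nu> v = \<nu> v"
  by (simp add: assign_def)

lemma assign_dist: "\<bar>assign vs z \<nu> v - assign vs w \<nu> v\<bar> \<le> max_dist (length vs) z w"
proof (cases "v \<in> set vs")
  case True
  then obtain i where "i < length vs" "vs ! i = v" by (auto simp: in_set_conv_nth)
  then have "(LEAST j. vs ! j = v) < length vs" using Least_le[of "\<lambda>j. vs ! j = v" i] by simp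
  then show ?thesis using True by (simp add: assign_def max_dist_ge)
qed (simp add: assign_def max_dist_nonneg)

definition lipschitz_near :: "nat \<Rightarrow> ((nat \<Rightarrow> real) \<Rightarrow> real) \<Rightarrow> (nat \<Rightarrow> real) \<Rightarrow> real \<Rightarrow> real \<Rightarrow> bool" where
  "lipschitz_near n G a d L \<longleftrightarrow> (\<forall>z w. max_dist n z a < d \<longrightarrow> max_dist n w a < d \<longrightarrow>
     \<bar>G z - G w\<bar> \<le> L * max_dist n z w)"

definition locally_lipschitz :: "nat \<Rightarrow> ((nat \<Rightarrow> real) \<Rightarrow> real) \<Rightarrow> bool" where
  "locally_lipschitz n G \<longleftrightarrow> (\<forall>a. \<exists>d>0. \<exists>L\<ge>0. lipschitz_near n G a d L)"

lemma lipschitz_near_mono: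
  assumes "lipschitz_near n G a d L" "d' \<le> d" "L \<le> L'"
  shows "lipschitz_near n G a d' L'"
  unfolding lipschitz_near_def
proof (intro allI impI)
  fix z w assume "max_dist n z a < d'" "max_dist n w a < d'"
  then have "\<bar>G z - G w\<bar> \<le> L * max_dist n z w"
    using assms(1,2) unfolding lipschitz_near_def by auto
  also have "\<dots> \<le> L' * max_dist n z w" using assms(3) max_dist_nonneg by (rule mult_right_mono)
  finally show "\<bar>G z - G w\<bar> \<le> L' * max_dist n z w" .
qed

lemma lipschitz_near_bounded:
  assumes "lipschitz_near n G a d L" "0 \<le> L" "max_dist n z a < d"
  shows "\<bar>G z\<bar> \<le> \<bar>G a\<bar> + L * d"
proof -
  have "max_dist n a a < d" using assms(3) max_dist_nonneg[of n z a] by simp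
  then have "\<bar>G z - G a\<bar> \<le> L * max_dist n z a"
    using assms(1,3) unfolding lipschitz_near_def by blast
  also have "\<dots> \<le> L * d" using assms(2,3) by (simp add: mult_left_mono)
  finally show ?thesis by linarith
qed

lemma locally_lipschitz_uniform:
  fixes m :: nat
  assumes "\<forall>j<m. locally_lipschitz n (G j)"
  shows "\<exists>d>0. \<exists>L\<ge>0. \<forall>j<m. lipschitz_near n (G j) a d L"
proof -
  have "\<forall>j<m. \<exists>d>0. \<exists>L\<ge>0. lipschitz_near n (G j) a d L"
    using assms unfolding locally_lipschitz_def by blast
  then have "\<exists>d>0. \<forall>j<m. \<exists>L\<ge>0. lipschitz_near n (G j) a d L"
  proof (rule finite_common_radius)
    fix j d d' assume "\<exists>L\<ge>0. lipschitz_near n (G j) a d L" "d' \<le> d"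
    then show "\<exists>L\<ge>0. lipschitz_near n (G j) a d' L" using lipschitz_near_mono[OF _ _ order_refl] by blast
  qed
  then obtain d where "d > 0" and d: "\<forall>j<m. \<exists>L\<ge>0. lipschitz_near n (G j) a d L" by blast
  from d have "\<exists>L\<ge>0. \<forall>j<m. lipschitz_near n (G j) a d L"
    by (rule finite_common_bound) (rule lipschitz_near_mono[OF _ order_refl])
  then show ?thesis using \<open>d > 0\<close> by blast
qed

lemma locally_lipschitz_pair:
  assumes "locally_lipschitz n F" "locally_lipschitz n G"
  obtains d L where "d > 0" "L \<ge> 0" "lipschitz_near n F a d L" "lipschitz_near n G a d L"
proof -
  obtain d1 L1 d2 L2 where "d1 > 0" "L1 \<ge> 0" "lipschitz_near n F a d1 L1"
    and "d2 > 0" "L2 \<ge> 0" "lipschitz_near n G a d2 L2"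
    using assms unfolding locally_lipschitz_def by meson
  moreover from this have "lipschitz_near n F a (min d1 d2) (max L1 L2)"
    and "lipschitz_near n G a (min d1 d2) (max L1 L2)"
    by (auto elim: lipschitz_near_mono)
  ultimately show ?thesis using that[of "min d1 d2" "max L1 L2"] by auto
qed

lemma locally_lipschitz_nonexpansive:
  "(\<And>z w. \<bar>G z - G w\<bar> \<le> max_dist n z w) \<Longrightarrow> locally_lipschitz n G"
  unfolding locally_lipschitz_def lipschitz_near_def by (metis mult_1 zero_less_one zero_le_one)

lemma locally_lipschitz_add:
  assumes "locally_lipschitz n F" "locally_lipschitz n G"
  shows "locally_lipschitz n (\<lambda>z. F z + G z)"
  unfolding locally_lipschitz_def
proof
  fix a
  obtain d L where "d > 0" "L \<ge> 0" and F: "lipschitz_near n F a d L" and G: "lipschitz_near n G a d L"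
    using locally_lipschitz_pair[OF assms] .
  have "lipschitz_near n (\<lambda>z. F z + G z) a d (L + L)"
    unfolding lipschitz_near_def
  proof (intro allI impI)
    fix z w assume "max_dist n z a < d" "max_dist n w a < d"
    then have "\<bar>F z - F w\<bar> \<le> L * max_dist n z w" "\<bar>G z - G w\<bar> \<le> L * max_dist n z w"
      using F G unfolding lipschitz_near_def by blast+
    then show "\<bar>F z + G z - (F w + G w)\<bar> \<le> (L + L) * max_dist n z w"
      by (simp add: algebra_simps)
  qed
  then show "\<exists>d>0. \<exists>L\<ge>0. lipschitz_near n (\<lambda>z. F z + G z) a d L"
    using \<open>d > 0\<close> \<open>L \<ge> 0\<close> by (metis add_nonneg_nonneg)
qed

lemma locally_lipschitz_mult:
  assumes "locally_lipschitz n F" "locally_lipschitz n G"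
  shows "locally_lipschitz n (\<lambda>z. F z * G z)"
  unfolding locally_lipschitz_def
proof
  fix a
  obtain d L where "d > 0" "L \<ge> 0" and F: "lipschitz_near n F a d L" and G: "lipschitz_near n G a d L"
    using locally_lipschitz_pair[OF assms] .
  define M where "M = max \<bar>F a\<bar> \<bar>G a\<bar> + L * d"
  have "M \<ge> 0" using \<open>d > 0\<close> \<open>L \<ge> 0\<close> by (simp add: M_def)
  have "lipschitz_near n (\<lambda>z. F z * G z) a d (2 * M * L)"
    unfolding lipschitz_near_def
  proof (intro allI impI)
    fix z w assume z: "max_dist n z a < d" and w: "max_dist n w a < d"
    have "\<bar>F z\<bar> \<le> M" "\<bar>G w\<bar> \<le> M"
      using lipschitz_near_bounded[OF F \<open>L \<ge> 0\<close> z] lipschitz_near_bounded[OF G \<open>L \<ge> 0\<close> w]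
      by (auto simp: M_def)
    moreover have "\<bar>F z - F w\<bar> \<le> L * max_dist n z w" "\<bar>G z - G w\<bar> \<le> L * max_dist n z w"
      using F G z w unfolding lipschitz_near_def by blast+
    moreover have "F z * G z - F w * G w = F z * (G z - G w) + G w * (F z - F w)"
      by (simp add: algebra_simps)
    then have "\<bar>F z * G z - F w * G w\<bar> \<le> \<bar>F z\<bar> * \<bar>G z - G w\<bar> + \<bar>G w\<bar> * \<bar>F z - F w\<bar>"
      by (metis abs_mult abs_triangle_ineq)
    ultimately have "\<bar>F z * G z - F w * G w\<bar> \<le> M * (L * max_dist n z w) + M * (L * max_dist n z w)"
      by (smt (verit, best) abs_ge_zero mult_mono)
    then show "\<bar>F z * G z - F w * G w\<bar> \<le> 2 * M * L * max_dist n z w"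
      by (simp add: algebra_simps)
  qed
  moreover have "2 * M * L \<ge> 0" using \<open>M \<ge> 0\<close> \<open>L \<ge> 0\<close> by simp
  ultimately show "\<exists>d>0. \<exists>L\<ge>0. lipschitz_near n (\<lambda>z. F z * G z) a d L"
    using \<open>d > 0\<close> by blast
qed

lemma locally_lipschitz_smooth_compose:
  assumes "smooth k g" "\<forall>j<k. locally_lipschitz n (G j)"
  shows "locally_lipschitz n (\<lambda>z. g (map (\<lambda>j. G j z) [0..<k]))"
  unfolding locally_lipschitz_def
proof
  fix a
  define p where "p = map (\<lambda>j. G j a) [0..<k]"
  obtain \<delta> K where "\<delta> > 0" "K \<ge> 0" and K: "\<forall>q r. length q = k \<longrightarrow> length r = k \<longrightarrow>
      (\<forall>i<k. \<bar>q ! i - p ! i\<bar> < \<delta>) \<longrightarrow> (\<forall>i<k. \<bar>r ! i - p ! i\<bar> < \<delta>) \<longrightarrow>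
      \<bar>g q - g r\<bar> \<le> K * (\<Sum>i<k. \<bar>q ! i - r ! i\<bar>)"
    using smooth_lipschitz_near[OF assms(1), of p] by (auto simp: p_def)
  obtain d L where "d > 0" "L \<ge> 0" and G: "\<forall>j<k. lipschitz_near n (G j) a d L"
    using locally_lipschitz_uniform[OF assms(2)] by blast
  define d' where "d' = min d (\<delta> / (L + 1))"
  have "d' > 0" using \<open>d > 0\<close> \<open>\<delta> > 0\<close> \<open>L \<ge> 0\<close> by (simp add: d'_def)
  have near: "\<bar>G j z - p ! j\<bar> < \<delta>" if z: "max_dist n z a < d'" and j: "j < k" for z j
  proof -
    have "max_dist n a a < d" "max_dist n z a < d" using z \<open>d > 0\<close> by (auto simp: d'_def)
    then have "\<bar>G j z - G j a\<bar> \<le> L * max_dist n z a"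
      using G j unfolding lipschitz_near_def by blast
    also have "\<dots> \<le> (L + 1) * max_dist n z a" by (simp add: max_dist_nonneg distrib_right)
    also have "\<dots> < (L + 1) * (\<delta> / (L + 1))"
      using z \<open>L \<ge> 0\<close> by (intro mult_strict_left_mono) (auto simp: d'_def)
    also have "\<dots> = \<delta>" using \<open>L \<ge> 0\<close> by simp
    finally show ?thesis using j by (simp add: p_def)
  qed
  have "lipschitz_near n (\<lambda>z. g (map (\<lambda>j. G j z) [0..<k])) a d' (K * (k * L))"
    unfolding lipschitz_near_def
  proof (intro allI impI)
    fix z w assume z: "max_dist n z a < d'" and w: "max_dist n w a < d'"
    have "\<bar>g (map (\<lambda>j. G j z) [0..<k]) - g (map (\<lambda>j. G j w) [0..<k])\<bar> \<le>
        K * (\<Sum>i<k. \<bar>G i z - G i w\<bar>)"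
      using K[rule_format, of "map (\<lambda>j. G j z) [0..<k]" "map (\<lambda>j. G j w) [0..<k]"]
        near[OF z] near[OF w] by simp
    also have "\<dots> \<le> K * (\<Sum>i<k. L * max_dist n z w)"
      using G z w \<open>K \<ge> 0\<close> unfolding lipschitz_near_def d'_def
      by (intro mult_left_mono sum_mono) auto
    also have "\<dots> = K * (k * L) * max_dist n z w" by simp
    finally show "\<bar>g (map (\<lambda>j. G j z) [0..<k]) - g (map (\<lambda>j. G j w) [0..<k])\<bar> \<le>
        K * (k * L) * max_dist n z w" .
  qed
  moreover have "K * (k * L) \<ge> 0" using \<open>K \<ge> 0\<close> \<open>L \<ge> 0\<close> by simp
  ultimately show "\<exists>d>0. \<exists>L\<ge>0. lipschitz_near n (\<lambda>z. g (map (\<lambda>j. G j z) [0..<k])) a d L"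
    using \<open>d' > 0\<close> by blast
qed

lemma tsem_locally_lipschitz:
  assumes smooth: "\<forall>g. smooth (ar g) (I g)" and "wf_trm ar t"
  shows "locally_lipschitz (length vs) (\<lambda>z. tsem I t (assign vs z \<nu>))"
  using assms(2)
proof (induction t)
  case (Var v)
  show ?case by (rule locally_lipschitz_nonexpansive) (simp add: assign_dist)
next
  case (Const r)
  show ?case by (rule locally_lipschitz_nonexpansive) (simp add: max_dist_nonneg)
next
  case (Plus t1 t2)
  then show ?case by (simp add: locally_lipschitz_add)
next
  case (Times t1 t2)
  then show ?case by (simp add: locally_lipschitz_mult)
next
  case (Fn g ts)
  have "map (\<lambda>t. tsem I t s) ts = map (\<lambda>j. tsem I (ts ! j) s) [0..<length ts]" for s
    by (rule nth_equalityI) auto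
  moreover have "locally_lipschitz (length vs)
      (\<lambda>z. I g (map (\<lambda>j. tsem I (ts ! j) (assign vs z \<nu>)) [0..<ar g]))"
    using Fn smooth by (intro locally_lipschitz_smooth_compose) auto
  ultimately show ?case using Fn.prems by simp
qed

lemma tsem_agree: "(\<forall>v\<in>tvars t. s1 v = s2 v) \<Longrightarrow> tsem I t s1 = tsem I t s2"
proof (induction t)
  case (Fn g ts)
  then have "map (\<lambda>t. tsem I t s1) ts = map (\<lambda>t. tsem I t s2) ts" by auto
  then show ?case by (simp only: tsem.simps)
qed auto

lemma tsem_agree_dfree:
  "dfree t \<Longrightarrow> (\<And>x. V x \<in> tvars t \<Longrightarrow> s1 (V x) = s2 (V x)) \<Longrightarrow> tsem I t s1 = tsem I t s2"
  by (rule tsem_agree) (metis dfree_def var.exhaust)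

lemma fsem_agree: "(\<forall>v\<in>fvars P. s1 v = s2 v) \<Longrightarrow> fsem I P s1 = fsem I P s2"
proof (induction P)
  case (Cmp c a b)
  then have "tsem I a s1 = tsem I a s2" "tsem I b s1 = tsem I b s2"
    by (auto simp: fvars_def intro!: tsem_agree)
  then show ?case by simp
qed (auto simp: fvars_def)

lemma fsem_agree_semianalytic:
  assumes "semianalytic ar P" "\<And>x. V x \<in> fvars P \<Longrightarrow> s1 (V x) = s2 (V x)"
  shows "fsem I P s1 = fsem I P s2"
proof (rule fsem_agree, intro ballI)
  fix v assume v: "v \<in> fvars P"
  then obtain t where "t \<in> fterms P" "v \<in> tvars t" unfolding fvars_def by blast
  then show "s1 v = s2 v"
    using assms v unfolding semianalytic_def dfree_def by (cases v) auto
qed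

subsection \<open>Picard--Lindel\<ouml>f in a Banach space\<close>

instance bcontfun :: (metric_space, banach) banach ..

definition picard_step :: "('b::banach \<Rightarrow> 'b) \<Rightarrow> 'b \<Rightarrow> real \<Rightarrow> (real \<Rightarrow>\<^sub>C 'b) \<Rightarrow> real \<Rightarrow> 'b" where
  "picard_step F a h u t = a + integral {0..clamp 0 h t} (\<lambda>s. F (u s))"

lemma picard_step_bcontfun_cball:
  fixes F :: "'b::banach \<Rightarrow> 'b" and u :: "real \<Rightarrow>\<^sub>C 'b"
  assumes contF: "continuous_on (cball a r) F" and bound: "\<And>z. z \<in> cball a r \<Longrightarrow> norm (F z) \<le> M"
    and "0 \<le> h" "h * M \<le> r" and u: "\<And>t. u t \<in> cball a r"
  shows "picard_step F a h u \<in> bcontfun" "picard_step F a h u t \<in> cball a r"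
proof -
  have cont: "continuous_on {0..x} (\<lambda>s. F (u s))" for x
    using u by (intro continuous_on_compose2[OF contF]) auto
  have "M \<ge> 0" using bound[OF u] norm_ge_zero order_trans by blast
  have in_ball: "a + integral {0..x} (\<lambda>s. F (u s)) \<in> cball a r" if "x \<in> {0..h}" for x
  proof -
    have "norm (integral {0..x} (\<lambda>s. F (u s))) \<le> M * (x - 0)"
      using that cont bound[OF u] by (intro integral_bound) auto
    also have "\<dots> \<le> r" using that \<open>h * M \<le> r\<close> \<open>M \<ge> 0\<close>
      by (smt (verit, best) atLeastAtMost_iff mult.commute mult_right_mono)
    finally show ?thesis by (simp add: dist_norm)
  qed
  have clamp_in: "clamp 0 h t \<in> {0..h}" for t using \<open>0 \<le> h\<close> clamp_in_interval[of 0 h t] by simp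
  show "picard_step F a h u t \<in> cball a r"
    unfolding picard_step_def using in_ball clamp_in by blast
  have "continuous_on {0..h} (\<lambda>x. a + integral {0..x} (\<lambda>s. F (u s)))"
    using cont[of h] by (intro continuous_intros indefinite_integral_continuous_1 integrable_continuous_interval)
  then have "continuous_on UNIV (picard_step F a h u)"
    unfolding picard_step_def by (intro clamp_continuous_on) simp
  moreover have "bounded (range (picard_step F a h u))"
    unfolding picard_step_def using in_ball clamp_in by (intro bounded_subset[OF bounded_cball]) blast
  ultimately show "picard_step F a h u \<in> bcontfun" by (simp add: bcontfun_def)
qed

lemma picard_step_contraction:
  fixes F :: "'b::banach \<Rightarrow> 'b" and u v :: "real \<Rightarrow>\<^sub>C 'b"
  assumes contF: "continuous_on (cball a r) F"
    and lip: "\<And>z w. z \<in> cball a r \<Longrightarrow> w \<in> cball a r \<Longrightarrow> norm (F z - F w) \<le> L * norm (z - w)"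
    and "0 \<le> L" "0 \<le> h" and u: "\<And>t. u t \<in> cball a r" and v: "\<And>t. v t \<in> cball a r"
  shows "dist (picard_step F a h u t) (picard_step F a h v t) \<le> h * L * dist u v"
proof -
  define x where "x = clamp 0 h t"
  have x: "x \<in> {0..h}" using \<open>0 \<le> h\<close> clamp_in_interval[of 0 h t] by (simp add: x_def)
  have cont: "continuous_on {0..x} (\<lambda>s. F (w s))" if "\<And>t. w t \<in> cball a r" for w :: "real \<Rightarrow>\<^sub>C 'b"
    using that by (intro continuous_on_compose2[OF contF]) auto
  have "dist (picard_step F a h u t) (picard_step F a h v t) =
      norm (integral {0..x} (\<lambda>s. F (u s) - F (v s)))"
    unfolding picard_step_def dist_norm x_def[symmetric]
    by (subst integral_diff) (auto intro: integrable_continuous_interval cont u v)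
  also have "\<dots> \<le> (L * dist u v) * (x - 0)"
  proof (rule integral_bound)
    show "continuous_on {0..x} (\<lambda>s. F (u s) - F (v s))"
      using cont[OF u] cont[OF v] by (intro continuous_intros)
    fix s
    have "norm (F (u s) - F (v s)) \<le> L * norm (u s - v s)" using lip u v by blast
    also have "\<dots> \<le> L * dist u v"
      using dist_bounded[of u s v] \<open>0 \<le> L\<close> by (intro mult_left_mono) (auto simp: dist_norm)
    finally show "norm (F (u s) - F (v s)) \<le> L * dist u v" .
  qed (use x in auto)
  also have "\<dots> \<le> h * L * dist u v"
    using x \<open>0 \<le> L\<close> mult_left_mono[of x h "L * dist u v"] by (simp add: mult_ac)
  finally show ?thesis .
qed

lemma picard_lindeloef_local:
  fixes F :: "'b::banach \<Rightarrow> 'b"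
  assumes "0 < r" and bound: "\<And>z. z \<in> cball a r \<Longrightarrow> norm (F z) \<le> M"
    and lip: "\<And>z w. z \<in> cball a r \<Longrightarrow> w \<in> cball a r \<Longrightarrow> norm (F z - F w) \<le> L * norm (z - w)"
  obtains h u where "h > 0" "u 0 = a" "\<And>t. t \<in> {0..h} \<Longrightarrow> u t \<in> cball a r"
    "\<And>t. t \<in> {0..h} \<Longrightarrow> (u has_vector_derivative F (u t)) (at t within {0..h})"
proof -
  define M' L' where "M' = max M 1" and "L' = max L 1"
  \<comment> \<open>on \<open>[0, h]\<close> the Picard operator maps the ball into itself and halves distances\<close>
  define h where "h = min (r / M') (1 / (2 * L'))"
  have "M' > 0" "L' > 0" "h > 0" using \<open>0 < r\<close> by (auto simp: M'_def L'_def h_def)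
  have "h * M' \<le> r" "h * L' \<le> 1 / 2"
    using \<open>M' > 0\<close> \<open>L' > 0\<close> by (auto simp: h_def min_def field_simps)
  have bound': "\<And>z. z \<in> cball a r \<Longrightarrow> norm (F z) \<le> M'"
    using bound by (smt (verit) M'_def)
  have lip': "\<And>z w. z \<in> cball a r \<Longrightarrow> w \<in> cball a r \<Longrightarrow> norm (F z - F w) \<le> L' * norm (z - w)"
    using lip by (smt (verit) L'_def mult_right_mono norm_ge_zero)
  have contF: "continuous_on (cball a r) F"
    using lip' \<open>L' > 0\<close> by (intro lipschitz_on_continuous_on[of L']) (auto simp: lipschitz_on_def dist_norm)
  define S where "S = PiC UNIV (\<lambda>_::real. cball a r)"
  have S_iff: "u \<in> S \<longleftrightarrow> (\<forall>t. u t \<in> cball a r)" for u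
    unfolding S_def mem_PiC_iff by auto
  define \<Phi> where "\<Phi> u = Bcontfun (picard_step F a h u)" for u
  have \<Phi>_apply: "apply_bcontfun (\<Phi> u) = picard_step F a h u" if "u \<in> S" for u
    unfolding \<Phi>_def using picard_step_bcontfun_cball(1)[OF contF bound'] that \<open>h > 0\<close> \<open>h * M' \<le> r\<close>
    by (simp add: S_iff Bcontfun_inverse)
  have "\<exists>!u\<in>S. \<Phi> u = u"
  proof (rule Banach_fix)
    show "complete S" unfolding S_def by (simp add: complete_eq_closed closed_PiC)
    show "S \<noteq> {}" using S_iff[of "const_bcontfun a"] \<open>0 < r\<close> by auto
    show "\<Phi> ` S \<subseteq> S"
      using picard_step_bcontfun_cball(2)[OF contF bound'] \<open>h > 0\<close> \<open>h * M' \<le> r\<close>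
      by (auto simp: S_iff \<Phi>_apply)
    fix u v assume "u \<in> S" "v \<in> S"
    then have "dist (\<Phi> u) (\<Phi> v) \<le> h * L' * dist u v"
      using picard_step_contraction[OF contF lip'] \<open>h > 0\<close> \<open>L' > 0\<close>
      by (intro dist_bound) (auto simp: \<Phi>_apply S_iff)
    also have "\<dots> \<le> 1 / 2 * dist u v" using \<open>h * L' \<le> 1 / 2\<close> by (intro mult_right_mono) auto
    finally show "dist (\<Phi> u) (\<Phi> v) \<le> 1 / 2 * dist u v" .
  qed simp_all
  then obtain u where "u \<in> S" "\<Phi> u = u" by blast
  then have u_eq: "u t = a + integral {0..t} (\<lambda>s. F (u s))" if "t \<in> {0..h}" for t
    using \<Phi>_apply[of u] that by (metis picard_step_def cbox_interval clamp_cancel_cbox)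
  show ?thesis
  proof
    show "u 0 = a" using u_eq[of 0] \<open>h > 0\<close> by simp
    fix t assume t: "t \<in> {0..h}"
    show "u t \<in> cball a r" using \<open>u \<in> S\<close> S_iff by blast
    have "continuous_on {0..h} (\<lambda>s. F (u s))"
      using \<open>u \<in> S\<close> by (intro continuous_on_compose2[OF contF]) (auto simp: S_iff)
    then have "((\<lambda>t. a + integral {0..t} (\<lambda>s. F (u s))) has_vector_derivative F (u t)) (at t within {0..h})"
      using t by (auto intro!: derivative_eq_intros integral_has_vector_derivative)
    then show "(u has_vector_derivative F (u t)) (at t within {0..h})"
      by (rule has_vector_derivative_transform_within[where d = 1]) (use t u_eq in auto)
  qed (rule \<open>h > 0\<close>)
qed

text \<open>A dimension given by a term has no Euclidean type, so a vector \<open>z\<close> of length \<open>n\<close> is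
  embedded into the Banach space of bounded continuous functions on \<open>\<real>\<close> as the piecewise
  linear interpolation of the values \<open>z i\<close> at the integers \<open>i < n\<close>.\<close>

definition hat :: "nat \<Rightarrow> real \<Rightarrow> real" where
  "hat i t = max 0 (1 - \<bar>t - real i\<bar>)"

definition vec_bcontfun :: "nat \<Rightarrow> (nat \<Rightarrow> real) \<Rightarrow> real \<Rightarrow>\<^sub>C real" where
  "vec_bcontfun n z = Bcontfun (\<lambda>t. \<Sum>i<n. z i * hat i t)"

lemma hat_of_nat: "hat i (real j) = (if i = j then 1 else 0)"
  by (cases "i = j") (auto simp: hat_def)

lemma abs_sum_hat_le: "\<bar>\<Sum>i<n. z i * hat i t\<bar> \<le> (\<Sum>i<n. \<bar>z i\<bar>)"
proof -
  have "\<bar>z i * hat i t\<bar> \<le> \<bar>z i\<bar>" for i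
    by (simp add: abs_mult hat_def mult_left_le)
  then have "(\<Sum>i<n. \<bar>z i * hat i t\<bar>) \<le> (\<Sum>i<n. \<bar>z i\<bar>)" by (intro sum_mono)
  then show ?thesis using sum_abs[of "\<lambda>i. z i * hat i t" "{..<n}"] by linarith
qed

lemma apply_vec_bcontfun: "apply_bcontfun (vec_bcontfun n z) t = (\<Sum>i<n. z i * hat i t)"
proof -
  have "(\<lambda>t. \<Sum>i<n. z i * hat i t) \<in> bcontfun"
  proof (rule bcontfun_normI[where b = "\<Sum>i<n. \<bar>z i\<bar>"])
    show "continuous_on UNIV (\<lambda>t. \<Sum>i<n. z i * hat i t)"
      unfolding hat_def by (intro continuous_intros)
  qed (simp add: abs_sum_hat_le)
  then show ?thesis by (simp add: vec_bcontfun_def Bcontfun_inverse)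
qed

lemma vec_bcontfun_nth: "j < n \<Longrightarrow> apply_bcontfun (vec_bcontfun n z) (real j) = z j"
  by (simp add: apply_vec_bcontfun hat_of_nat if_distrib cong: if_cong)

lemma norm_vec_bcontfun_le: "norm (vec_bcontfun n z) \<le> (\<Sum>i<n. \<bar>z i\<bar>)"
  by (rule norm_bound) (simp add: apply_vec_bcontfun abs_sum_hat_le)

lemma vec_bcontfun_diff: "vec_bcontfun n z - vec_bcontfun n w = vec_bcontfun n (\<lambda>i. z i - w i)"
  by (rule bcontfun_eqI) (simp add: apply_vec_bcontfun sum_subtractf left_diff_distrib)

lemma max_dist_le_dist:
  fixes Z W :: "real \<Rightarrow>\<^sub>C real"
  shows "max_dist n (\<lambda>i. Z (real i)) (\<lambda>i. W (real i)) \<le> dist Z W"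
  using dist_bounded[of Z _ W] by (intro max_dist_le) (auto simp: dist_real_def)

lemma bounded_linear_apply_bcontfun: "bounded_linear (\<lambda>Z :: 'a::topological_space \<Rightarrow>\<^sub>C real. Z x)"
  by (rule bounded_linear_intro[where K = 1]) (auto, metis norm_bounded real_norm_def)

lemma vec_bcontfun_field_bounds:
  fixes a :: "real \<Rightarrow>\<^sub>C real" and G :: "nat \<Rightarrow> (nat \<Rightarrow> real) \<Rightarrow> real"
  assumes lip: "\<forall>i<n. lipschitz_near n (G i) (\<lambda>j. a (real j)) d L" and "0 < d" "0 \<le> L"
  shows "\<And>Z. Z \<in> cball a (d / 2) \<Longrightarrow>
      norm (vec_bcontfun n (\<lambda>i. G i (\<lambda>j. Z (real j)))) \<le> (\<Sum>i<n. \<bar>G i (\<lambda>j. a (real j))\<bar> + L * d)"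
    and "\<And>Z W. Z \<in> cball a (d / 2) \<Longrightarrow> W \<in> cball a (d / 2) \<Longrightarrow>
      norm (vec_bcontfun n (\<lambda>i. G i (\<lambda>j. Z (real j))) - vec_bcontfun n (\<lambda>i. G i (\<lambda>j. W (real j))))
        \<le> (real n * L) * norm (Z - W)"
proof -
  have near: "max_dist n (\<lambda>j. U (real j)) (\<lambda>j. a (real j)) < d" if "U \<in> cball a (d / 2)" for U
    using max_dist_le_dist[of n U a] that \<open>0 < d\<close> by (simp add: dist_commute)
  fix Z W assume Z: "Z \<in> cball a (d / 2)"
  have "(\<Sum>i<n. \<bar>G i (\<lambda>j. Z (real j))\<bar>) \<le> (\<Sum>i<n. \<bar>G i (\<lambda>j. a (real j))\<bar> + L * d)"
    using lipschitz_near_bounded lip near[OF Z] \<open>0 \<le> L\<close> by (intro sum_mono) blast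
  then show "norm (vec_bcontfun n (\<lambda>i. G i (\<lambda>j. Z (real j)))) \<le> (\<Sum>i<n. \<bar>G i (\<lambda>j. a (real j))\<bar> + L * d)"
    by (rule order_trans[OF norm_vec_bcontfun_le])
  assume W: "W \<in> cball a (d / 2)"
  have "\<bar>G i (\<lambda>j. Z (real j)) - G i (\<lambda>j. W (real j))\<bar> \<le> L * norm (Z - W)" if "i < n" for i
  proof -
    have "\<bar>G i (\<lambda>j. Z (real j)) - G i (\<lambda>j. W (real j))\<bar> \<le>
        L * max_dist n (\<lambda>j. Z (real j)) (\<lambda>j. W (real j))"
      using lip that near[OF Z] near[OF W] unfolding lipschitz_near_def by blast
    also have "\<dots> \<le> L * norm (Z - W)"
      using max_dist_le_dist[of n Z W] \<open>0 \<le> L\<close> by (simp add: dist_norm mult_left_mono)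
    finally show ?thesis .
  qed
  then have "(\<Sum>i<n. \<bar>G i (\<lambda>j. Z (real j)) - G i (\<lambda>j. W (real j))\<bar>) \<le> (\<Sum>i<n. L * norm (Z - W))"
    by (intro sum_mono) auto
  then show "norm (vec_bcontfun n (\<lambda>i. G i (\<lambda>j. Z (real j))) - vec_bcontfun n (\<lambda>i. G i (\<lambda>j. W (real j))))
      \<le> (real n * L) * norm (Z - W)"
    using norm_vec_bcontfun_le[of n "\<lambda>i. G i (\<lambda>j. Z (real j)) - G i (\<lambda>j. W (real j))"]
    by (simp add: vec_bcontfun_diff)
qed

lemma lipschitz_coordinate_ode_exists:
  fixes G :: "nat \<Rightarrow> (nat \<Rightarrow> real) \<Rightarrow> real"
  assumes "\<forall>i<n. locally_lipschitz n (G i)"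
  obtains h u where "h > 0" "\<And>i. i < n \<Longrightarrow> u 0 i = z i"
    "\<And>t i. t \<in> {0..h} \<Longrightarrow> i < n \<Longrightarrow> ((\<lambda>t. u t i) has_real_derivative G i (u t)) (at t within {0..h})"
proof -
  define a where "a = vec_bcontfun n z"
  obtain d L where "0 < d" "0 \<le> L" and lip: "\<forall>i<n. lipschitz_near n (G i) (\<lambda>j. a (real j)) d L"
    using locally_lipschitz_uniform[OF assms] by blast
  obtain h U where "h > 0" "U 0 = a" "\<And>t. t \<in> {0..h} \<Longrightarrow> U t \<in> cball a (d / 2)"
    and U: "\<And>t. t \<in> {0..h} \<Longrightarrow>
      (U has_vector_derivative vec_bcontfun n (\<lambda>i. G i (\<lambda>j. U t (real j)))) (at t within {0..h})"
    by (rule picard_lindeloef_local[of "d / 2" a, OF half_gt_zero[OF \<open>0 < d\<close>]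
          vec_bcontfun_field_bounds[OF lip \<open>0 < d\<close> \<open>0 \<le> L\<close>]]) (assumption+, rule that)
  show ?thesis
  proof (rule that[of h "\<lambda>t j. U t (real j)"])
    show "U 0 (real i) = z i" if "i < n" for i
      using that \<open>U 0 = a\<close> by (simp add: a_def vec_bcontfun_nth)
    fix t i assume t: "t \<in> {0..h}" and i: "i < n"
    have "((\<lambda>t. U t (real i)) has_vector_derivative
        vec_bcontfun n (\<lambda>i. G i (\<lambda>j. U t (real j))) (real i)) (at t within {0..h})"
      using bounded_linear.has_vector_derivative[OF bounded_linear_apply_bcontfun U[OF t]] .
    then show "((\<lambda>t. U t (real i)) has_real_derivative G i (\<lambda>j. U t (real j))) (at t within {0..h})"
      using i by (simp add: vec_bcontfun_nth has_real_derivative_iff_has_vector_derivative)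
  qed (rule \<open>h > 0\<close>)
qed

lemma lipschitz_ode_unique:
  fixes u v :: "real \<Rightarrow> nat \<Rightarrow> real" and F :: "nat \<Rightarrow> (nat \<Rightarrow> real) \<Rightarrow> real"
  assumes du: "\<And>s i. s \<in> {0..e} \<Longrightarrow> i < n \<Longrightarrow> ((\<lambda>t. u t i) has_real_derivative F i (u s)) (at s within {0..e})"
    and dv: "\<And>s i. s \<in> {0..e} \<Longrightarrow> i < n \<Longrightarrow> ((\<lambda>t. v t i) has_real_derivative F i (v s)) (at s within {0..e})"
    and lip: "\<And>s i. s \<in> {0..e} \<Longrightarrow> i < n \<Longrightarrow> \<bar>F i (u s) - F i (v s)\<bar> \<le> L * max_dist n (u s) (v s)"
    and "0 \<le> L" and init: "\<And>i. i < n \<Longrightarrow> u 0 i = v 0 i"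
    and s: "s \<in> {0..e}" and i: "i < n"
  shows "u s i = v s i"
proof -
  define p where "p s i = u s i - v s i" for s i
  define w where "w s = (\<Sum>i<n. p s i * p s i)" for s
  define w' where "w' s = (\<Sum>i<n. 2 * (p s i * (F i (u s) - F i (v s))))" for s
  have w_nonneg: "0 \<le> w s" for s unfolding w_def by (intro sum_nonneg) auto
  have w_deriv: "(w has_real_derivative w' s) (at s within {0..e})" if "s \<in> {0..e}" for s
    unfolding w_def w'_def p_def
    by (auto intro!: derivative_eq_intros du dv that simp: algebra_simps)
  have p_le: "\<bar>p s i\<bar> \<le> sqrt (w s)" if "i < n" for s i
    using that by (intro real_le_rsqrt) (auto simp: w_def power2_eq_square intro: member_le_sum)
  have "w' s \<le> (2 * n * L) * w s" if s: "s \<in> {0..e}" for s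
  proof -
    have dist_le: "max_dist n (u s) (v s) \<le> sqrt (w s)"
      using p_le w_nonneg[of s] by (intro max_dist_le) (auto simp: p_def)
    have "2 * (p s i * (F i (u s) - F i (v s))) \<le> 2 * (sqrt (w s) * (L * sqrt (w s)))" if "i < n" for i
    proof -
      have "\<bar>F i (u s) - F i (v s)\<bar> \<le> L * sqrt (w s)"
        using lip[OF s that] dist_le \<open>0 \<le> L\<close> by (meson mult_left_mono order_trans)
      then have "\<bar>p s i * (F i (u s) - F i (v s))\<bar> \<le> sqrt (w s) * (L * sqrt (w s))"
        unfolding abs_mult using p_le[OF that] w_nonneg[of s] by (intro mult_mono) auto
      then show ?thesis by simp
    qed
    then have "w' s \<le> (\<Sum>i<n. 2 * (sqrt (w s) * (L * sqrt (w s))))"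
      unfolding w'_def by (intro sum_mono) auto
    also have "\<dots> = (2 * n * L) * w s" using w_nonneg[of s] by (simp add: algebra_simps)
    finally show ?thesis .
  qed
  moreover have "w 0 = 0" using init by (simp add: w_def p_def)
  ultimately have "w s = 0" using gronwall_zero[OF w_deriv] w_nonneg s by blast
  then have "p s i * p s i = 0"
    using i w_nonneg unfolding w_def by (subst (asm) sum_nonneg_eq_0_iff) auto
  then show ?thesis by (simp add: p_def)
qed

locale ode_system =
  fixes I :: "nat \<Rightarrow> real list \<Rightarrow> real" and ar :: "nat \<Rightarrow> nat"
    and xs :: "ident list" and fs :: "trm list"
  assumes smooth_I: "\<forall>g. smooth (ar g) (I g)"
    and distinct_xs: "distinct xs"
    and length_fs: "length fs = length xs"
    and fs_wf_dfree: "\<forall>t\<in>set fs. wf_trm ar t \<and> dfree t"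
begin

definition solution :: "(real \<Rightarrow> state) \<Rightarrow> real \<Rightarrow> (state \<Rightarrow> bool) \<Rightarrow> bool" where
  "solution \<phi> T Q \<longleftrightarrow> (\<forall>\<zeta>\<in>{0..T}.
     (\<forall>i<length xs. \<phi> \<zeta> (D (xs ! i)) = tsem I (fs ! i) (\<phi> \<zeta>)) \<and> Q (\<phi> \<zeta>) \<and>
     (\<forall>v. v \<notin> V ` set xs \<and> v \<notin> D ` set xs \<longrightarrow> \<phi> \<zeta> v = \<phi> 0 v) \<and>
     (T > 0 \<longrightarrow> (\<forall>i<length xs.
        ((\<lambda>t. \<phi> t (V (xs ! i))) has_real_derivative \<phi> \<zeta> (D (xs ! i))) (at \<zeta> within {0..T}))))"

lemma ode_rel_iff_solution:
  "ode_rel I xs fs Q \<omega> \<nu> \<longleftrightarrow>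
   (\<exists>T\<ge>0. \<exists>\<phi>. (\<forall>v. v \<notin> D ` set xs \<longrightarrow> \<phi> 0 v = \<omega> v) \<and> \<phi> T = \<nu> \<and> solution \<phi> T Q)"
  unfolding ode_rel_def solution_def by blast

lemma solution_ode:
  "solution \<phi> T Q \<Longrightarrow> \<zeta> \<in> {0..T} \<Longrightarrow> i < length xs \<Longrightarrow> \<phi> \<zeta> (D (xs ! i)) = tsem I (fs ! i) (\<phi> \<zeta>)"
  unfolding solution_def by blast

lemma solution_domain: "solution \<phi> T Q \<Longrightarrow> \<zeta> \<in> {0..T} \<Longrightarrow> Q (\<phi> \<zeta>)"
  unfolding solution_def by blast

lemma solution_const:
  "solution \<phi> T Q \<Longrightarrow> \<zeta> \<in> {0..T} \<Longrightarrow> v \<notin> V ` set xs \<Longrightarrow> v \<notin> D ` set xs \<Longrightarrow> \<phi> \<zeta> v = \<phi> 0 v"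
  unfolding solution_def by blast

lemma solution_deriv:
  assumes "solution \<phi> T Q" "\<zeta> \<in> {0..T}" "i < length xs"
  shows "((\<lambda>t. \<phi> t (V (xs ! i))) has_real_derivative \<phi> \<zeta> (D (xs ! i))) (at \<zeta> within {0..T})"
proof (cases "T > 0")
  case False
  then have "{0..T} = {\<zeta>}" using assms(2) by auto
  then show ?thesis by (simp add: has_real_derivative_at_non_limpt islimpt_insert)
next
  case True
  with assms show ?thesis unfolding solution_def by blast
qed

lemma solutionI:
  assumes "\<And>\<zeta> i. \<zeta> \<in> {0..T} \<Longrightarrow> i < length xs \<Longrightarrow> \<phi> \<zeta> (D (xs ! i)) = tsem I (fs ! i) (\<phi> \<zeta>)"
    and "\<And>\<zeta>. \<zeta> \<in> {0..T} \<Longrightarrow> Q (\<phi> \<zeta>)"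
    and "\<And>\<zeta> v. \<zeta> \<in> {0..T} \<Longrightarrow> v \<notin> V ` set xs \<Longrightarrow> v \<notin> D ` set xs \<Longrightarrow> \<phi> \<zeta> v = \<phi> 0 v"
    and "\<And>\<zeta> i. \<zeta> \<in> {0..T} \<Longrightarrow> i < length xs \<Longrightarrow>
          ((\<lambda>t. \<phi> t (V (xs ! i))) has_real_derivative \<phi> \<zeta> (D (xs ! i))) (at \<zeta> within {0..T})"
  shows "solution \<phi> T Q"
  unfolding solution_def using assms by blast

lemma solution_weaken_domain:
  "solution \<phi> T Q \<Longrightarrow> (\<And>\<zeta>. \<zeta> \<in> {0..T} \<Longrightarrow> Q' (\<phi> \<zeta>)) \<Longrightarrow> solution \<phi> T Q'"
  by (rule solutionI) (auto intro: solution_ode solution_const solution_deriv)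

lemma solution_restrict:
  assumes "solution \<phi> T Q" "T' \<le> T"
  shows "solution \<phi> T' Q"
proof (rule solutionI)
  fix \<zeta> assume \<zeta>: "\<zeta> \<in> {0..T'}"
  then have "\<zeta> \<in> {0..T}" using assms(2) by auto
  note facts = solution_ode[OF assms(1) this] solution_domain[OF assms(1) this]
    solution_const[OF assms(1) this] solution_deriv[OF assms(1) this]
  then show "\<And>i. i < length xs \<Longrightarrow> \<phi> \<zeta> (D (xs ! i)) = tsem I (fs ! i) (\<phi> \<zeta>)" "Q (\<phi> \<zeta>)"
    "\<And>v. v \<notin> V ` set xs \<Longrightarrow> v \<notin> D ` set xs \<Longrightarrow> \<phi> \<zeta> v = \<phi> 0 v" by auto
  fix i assume "i < length xs"
  show "((\<lambda>t. \<phi> t (V (xs ! i))) has_real_derivative \<phi> \<zeta> (D (xs ! i))) (at \<zeta> within {0..T'})"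
    by (rule DERIV_subset[OF facts(4)]) (use \<open>i < length xs\<close> assms(2) in auto)
qed

lemma solution_shift:
  assumes "solution \<phi> T Q" "0 \<le> t\<^sub>0" "t\<^sub>0 \<le> T"
  shows "solution (\<lambda>s. \<phi> (s + t\<^sub>0)) (T - t\<^sub>0) Q"
proof (rule solutionI)
  fix \<zeta> assume "\<zeta> \<in> {0..T - t\<^sub>0}"
  then have \<zeta>: "\<zeta> + t\<^sub>0 \<in> {0..T}" and t\<^sub>0: "t\<^sub>0 \<in> {0..T}" using assms by auto
  show "\<And>i. i < length xs \<Longrightarrow> \<phi> (\<zeta> + t\<^sub>0) (D (xs ! i)) = tsem I (fs ! i) (\<phi> (\<zeta> + t\<^sub>0))"
    "Q (\<phi> (\<zeta> + t\<^sub>0))"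
    using solution_ode[OF assms(1) \<zeta>] solution_domain[OF assms(1) \<zeta>] by auto
  show "\<And>v. v \<notin> V ` set xs \<Longrightarrow> v \<notin> D ` set xs \<Longrightarrow> \<phi> (\<zeta> + t\<^sub>0) v = \<phi> (0 + t\<^sub>0) v"
    using solution_const[OF assms(1) \<zeta>] solution_const[OF assms(1) t\<^sub>0] by simp
  fix i assume "i < length xs"
  then have "((\<lambda>t. \<phi> t (V (xs ! i))) has_real_derivative \<phi> (\<zeta> + t\<^sub>0) (D (xs ! i)))
      (at (\<zeta> + t\<^sub>0) within {0 + t\<^sub>0..(T - t\<^sub>0) + t\<^sub>0})"
    by (rule DERIV_subset[OF solution_deriv[OF assms(1) \<zeta>]]) (use assms in auto)
  then show "((\<lambda>t. \<phi> (t + t\<^sub>0) (V (xs ! i))) has_real_derivative \<phi> (\<zeta> + t\<^sub>0) (D (xs ! i)))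
      (at \<zeta> within {0..T - t\<^sub>0})"
    by (rule has_real_derivative_shift_within)
qed

lemma solution_append:
  assumes s1: "solution \<phi>\<^sub>1 T\<^sub>1 Q" and s2: "solution \<phi>\<^sub>2 T\<^sub>2 Q" and join: "\<phi>\<^sub>2 0 = \<phi>\<^sub>1 T\<^sub>1"
    and "0 \<le> T\<^sub>1" "0 \<le> T\<^sub>2"
  shows "solution (\<lambda>t. if t \<le> T\<^sub>1 then \<phi>\<^sub>1 t else \<phi>\<^sub>2 (t - T\<^sub>1)) (T\<^sub>1 + T\<^sub>2) Q"
proof (rule solutionI)
  fix \<zeta> assume \<zeta>: "\<zeta> \<in> {0..T\<^sub>1 + T\<^sub>2}"
  have in1: "\<zeta> \<in> {0..T\<^sub>1}" if "\<zeta> \<le> T\<^sub>1" using \<zeta> that by auto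
  have in2: "\<zeta> - T\<^sub>1 \<in> {0..T\<^sub>2}" if "\<not> \<zeta> \<le> T\<^sub>1" using \<zeta> that by auto
  show "\<And>i. i < length xs \<Longrightarrow> (if \<zeta> \<le> T\<^sub>1 then \<phi>\<^sub>1 \<zeta> else \<phi>\<^sub>2 (\<zeta> - T\<^sub>1)) (D (xs ! i)) =
      tsem I (fs ! i) (if \<zeta> \<le> T\<^sub>1 then \<phi>\<^sub>1 \<zeta> else \<phi>\<^sub>2 (\<zeta> - T\<^sub>1))"
    "Q (if \<zeta> \<le> T\<^sub>1 then \<phi>\<^sub>1 \<zeta> else \<phi>\<^sub>2 (\<zeta> - T\<^sub>1))"
    using solution_ode[OF s1 in1] solution_ode[OF s2 in2]
      solution_domain[OF s1 in1] solution_domain[OF s2 in2] by auto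
  show "\<And>v. v \<notin> V ` set xs \<Longrightarrow> v \<notin> D ` set xs \<Longrightarrow>
      (if \<zeta> \<le> T\<^sub>1 then \<phi>\<^sub>1 \<zeta> else \<phi>\<^sub>2 (\<zeta> - T\<^sub>1)) v = (if 0 \<le> T\<^sub>1 then \<phi>\<^sub>1 0 else \<phi>\<^sub>2 (0 - T\<^sub>1)) v"
    using solution_const[OF s1 in1] solution_const[OF s2 in2] join \<open>0 \<le> T\<^sub>1\<close>
      solution_const[OF s1, of T\<^sub>1] by auto
  fix i assume i: "i < length xs"
  have "((\<lambda>t. if t \<le> T\<^sub>1 then \<phi>\<^sub>1 t (V (xs ! i)) else \<phi>\<^sub>2 (t - T\<^sub>1) (V (xs ! i))) has_real_derivative
      (if \<zeta> \<le> T\<^sub>1 then \<phi>\<^sub>1 \<zeta> else \<phi>\<^sub>2 (\<zeta> - T\<^sub>1)) (D (xs ! i))) (at \<zeta> within {0..T\<^sub>1 + T\<^sub>2})"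
  proof (rule has_real_derivative_join)
    show "\<phi>\<^sub>1 T\<^sub>1 (V (xs ! i)) = \<phi>\<^sub>2 (T\<^sub>1 - T\<^sub>1) (V (xs ! i))" using join by simp
    show "((\<lambda>t. \<phi>\<^sub>1 t (V (xs ! i))) has_real_derivative (if \<zeta> \<le> T\<^sub>1 then \<phi>\<^sub>1 \<zeta> else \<phi>\<^sub>2 (\<zeta> - T\<^sub>1)) (D (xs ! i)))
        (at \<zeta> within {0..T\<^sub>1})" if "\<zeta> \<le> T\<^sub>1"
      using solution_deriv[OF s1 in1[OF that] i] that by simp
    assume "T\<^sub>1 \<le> \<zeta>"
    then have "\<phi>\<^sub>2 (\<zeta> - T\<^sub>1) = (if \<zeta> \<le> T\<^sub>1 then \<phi>\<^sub>1 \<zeta> else \<phi>\<^sub>2 (\<zeta> - T\<^sub>1))" using join by auto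
    moreover have "((\<lambda>t. \<phi>\<^sub>2 (t + - T\<^sub>1) (V (xs ! i))) has_real_derivative \<phi>\<^sub>2 (\<zeta> - T\<^sub>1) (D (xs ! i)))
        (at \<zeta> within {T\<^sub>1..T\<^sub>1 + T\<^sub>2})"
      using solution_deriv[OF s2 _ i, of "\<zeta> - T\<^sub>1"] \<open>T\<^sub>1 \<le> \<zeta>\<close> \<zeta>
      by (intro has_real_derivative_shift_within) auto
    ultimately show "((\<lambda>t. \<phi>\<^sub>2 (t - T\<^sub>1) (V (xs ! i))) has_real_derivative
        (if \<zeta> \<le> T\<^sub>1 then \<phi>\<^sub>1 \<zeta> else \<phi>\<^sub>2 (\<zeta> - T\<^sub>1)) (D (xs ! i))) (at \<zeta> within {T\<^sub>1..T\<^sub>1 + T\<^sub>2})"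
      by simp
  qed (use \<zeta> \<open>0 \<le> T\<^sub>1\<close> \<open>0 \<le> T\<^sub>2\<close> in auto)
  moreover have "(\<lambda>t. (if t \<le> T\<^sub>1 then \<phi>\<^sub>1 t else \<phi>\<^sub>2 (t - T\<^sub>1)) (V (xs ! i))) =
      (\<lambda>t. if t \<le> T\<^sub>1 then \<phi>\<^sub>1 t (V (xs ! i)) else \<phi>\<^sub>2 (t - T\<^sub>1) (V (xs ! i)))"
    by auto
  ultimately show "((\<lambda>t. (if t \<le> T\<^sub>1 then \<phi>\<^sub>1 t else \<phi>\<^sub>2 (t - T\<^sub>1)) (V (xs ! i))) has_real_derivative
      (if \<zeta> \<le> T\<^sub>1 then \<phi>\<^sub>1 \<zeta> else \<phi>\<^sub>2 (\<zeta> - T\<^sub>1)) (D (xs ! i))) (at \<zeta> within {0..T\<^sub>1 + T\<^sub>2})"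
    by simp
qed

lemma solution_frame:
  assumes s: "solution \<phi> T Q"
    and Y: "\<And>y. y \<in> Y \<Longrightarrow> y \<notin> V ` set xs \<and> y \<notin> D ` set xs \<and> (\<forall>t\<in>set fs. y \<notin> tvars t)"
    and Q': "\<And>\<zeta>. \<zeta> \<in> {0..T} \<Longrightarrow> Q' (\<lambda>v. if v \<in> Y then c v else \<phi> \<zeta> v)"
  shows "solution (\<lambda>\<zeta> v. if v \<in> Y then c v else \<phi> \<zeta> v) T Q'"
proof -
  have notY: "V (xs ! i) \<notin> Y" "D (xs ! i) \<notin> Y" if "i < length xs" for i
  proof -
    have "V (xs ! i) \<in> V ` set xs" "D (xs ! i) \<in> D ` set xs" using nth_mem[OF that] by simp_all
    then show "V (xs ! i) \<notin> Y" "D (xs ! i) \<notin> Y" using Y by auto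
  qed
  show ?thesis
  proof (rule solutionI)
    fix \<zeta> i assume \<zeta>: "\<zeta> \<in> {0..T}" and i: "i < length xs"
    have "fs ! i \<in> set fs" using i length_fs by simp
    then have "\<forall>v\<in>tvars (fs ! i). (if v \<in> Y then c v else \<phi> \<zeta> v) = \<phi> \<zeta> v"
      using Y by fastforce
    then have "tsem I (fs ! i) (\<lambda>v. if v \<in> Y then c v else \<phi> \<zeta> v) = tsem I (fs ! i) (\<phi> \<zeta>)"
      by (rule tsem_agree)
    then show "(if D (xs ! i) \<in> Y then c (D (xs ! i)) else \<phi> \<zeta> (D (xs ! i))) =
        tsem I (fs ! i) (\<lambda>v. if v \<in> Y then c v else \<phi> \<zeta> v)"
      using notY[OF i] solution_ode[OF s \<zeta> i] by simp
  next
    fix \<zeta> assume "\<zeta> \<in> {0..T}"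
    then show "Q' (\<lambda>v. if v \<in> Y then c v else \<phi> \<zeta> v)" by (rule Q')
  next
    fix \<zeta> v assume "\<zeta> \<in> {0..T}" "v \<notin> V ` set xs" "v \<notin> D ` set xs"
    then show "(if v \<in> Y then c v else \<phi> \<zeta> v) = (if v \<in> Y then c v else \<phi> 0 v)"
      using solution_const[OF s, of \<zeta> v] by simp
  next
    fix \<zeta> i assume \<zeta>: "\<zeta> \<in> {0..T}" and i: "i < length xs"
    show "((\<lambda>t. if V (xs ! i) \<in> Y then c (V (xs ! i)) else \<phi> t (V (xs ! i))) has_real_derivative
        (if D (xs ! i) \<in> Y then c (D (xs ! i)) else \<phi> \<zeta> (D (xs ! i)))) (at \<zeta> within {0..T})"
      using notY[OF i] solution_deriv[OF s \<zeta> i] by simp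
  qed
qed

lemma solution_escape:
  assumes s: "solution \<phi> T Q" and t\<^sub>0: "0 \<le> t\<^sub>0" "t\<^sub>0 < T" and i: "i < length xs"
    and moving: "tsem I (fs ! i) (\<phi> t\<^sub>0) \<noteq> 0"
  obtains \<epsilon> where "\<epsilon> > 0"
    "\<And>s. 0 < s \<Longrightarrow> s < \<epsilon> \<Longrightarrow> t\<^sub>0 + s \<le> T \<Longrightarrow> \<phi> (t\<^sub>0 + s) (V (xs ! i)) \<noteq> \<phi> t\<^sub>0 (V (xs ! i))"
proof -
  have t\<^sub>0_in: "t\<^sub>0 \<in> {0..T}" using t\<^sub>0 by auto
  have "((\<lambda>t. (\<phi> t (V (xs ! i)) - \<phi> t\<^sub>0 (V (xs ! i))) / (t - t\<^sub>0)) \<longlongrightarrow> \<phi> t\<^sub>0 (D (xs ! i)))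
      (at t\<^sub>0 within {0..T})"
    using solution_deriv[OF s t\<^sub>0_in i] by (simp add: has_field_derivative_iff)
  moreover have "\<phi> t\<^sub>0 (D (xs ! i)) \<noteq> 0" using solution_ode[OF s t\<^sub>0_in i] moving by simp
  ultimately have "\<forall>\<^sub>F t in at t\<^sub>0 within {0..T}. (\<phi> t (V (xs ! i)) - \<phi> t\<^sub>0 (V (xs ! i))) / (t - t\<^sub>0) \<noteq> 0"
    by (rule tendsto_imp_eventually_ne)
  then obtain \<epsilon> where "\<epsilon> > 0" and \<epsilon>: "\<And>t. t \<in> {0..T} \<Longrightarrow> t \<noteq> t\<^sub>0 \<Longrightarrow> dist t t\<^sub>0 < \<epsilon> \<Longrightarrow>
      (\<phi> t (V (xs ! i)) - \<phi> t\<^sub>0 (V (xs ! i))) / (t - t\<^sub>0) \<noteq> 0"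
    unfolding eventually_at by blast
  show ?thesis
  proof (rule that[OF \<open>\<epsilon> > 0\<close>])
    fix s assume "0 < s" "s < \<epsilon>" "t\<^sub>0 + s \<le> T"
    then show "\<phi> (t\<^sub>0 + s) (V (xs ! i)) \<noteq> \<phi> t\<^sub>0 (V (xs ! i))"
      using \<epsilon>[of "t\<^sub>0 + s"] t\<^sub>0 by (auto simp: dist_real_def)
  qed
qed

lemma solution_initial_state:
  assumes s: "solution \<psi> h Q" "0 \<le> h" and init: "\<And>v. v \<notin> D ` set xs \<Longrightarrow> \<psi> 0 v = \<nu> v"
    and ode: "\<And>i. i < length xs \<Longrightarrow> \<nu> (D (xs ! i)) = tsem I (fs ! i) \<nu>"
  shows "\<psi> 0 = \<nu>"
proof
  fix v
  show "\<psi> 0 v = \<nu> v"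
  proof (cases "v \<in> D ` set xs")
    case True
    then obtain i where i: "i < length xs" "v = D (xs ! i)" by (auto simp: in_set_conv_nth)
    have "fs ! i \<in> set fs" using i length_fs by simp
    then have "tsem I (fs ! i) (\<psi> 0) = tsem I (fs ! i) \<nu>"
      using fs_wf_dfree init by (intro tsem_agree_dfree) auto
    then show ?thesis using solution_ode[OF s(1) _ i(1), of 0] ode[OF i(1)] s(2) i(2) by simp
  qed (rule init)
qed

lemma solution_stays_near_start:
  assumes s: "solution \<phi> T Q" and "0 < T" "0 < d"
  obtains e where "0 < e" "e \<le> T"
    "\<And>t. t \<in> {0..e} \<Longrightarrow> max_dist (length xs) (\<lambda>i. \<phi> t (V (xs ! i))) (\<lambda>i. \<phi> 0 (V (xs ! i))) < d"
proof -
  have "\<forall>\<^sub>F t in at 0 within {0..T}. \<forall>i\<in>{..<length xs}. \<bar>\<phi> t (V (xs ! i)) - \<phi> 0 (V (xs ! i))\<bar> < d / 2"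
  proof (intro eventually_ball_finite ballI)
    fix i assume "i \<in> {..<length xs}"
    then have "continuous (at 0 within {0..T}) (\<lambda>t. \<phi> t (V (xs ! i)))"
      using solution_deriv[OF s, of 0 i] \<open>0 < T\<close> by (auto intro: DERIV_continuous)
    then show "\<forall>\<^sub>F t in at 0 within {0..T}. \<bar>\<phi> t (V (xs ! i)) - \<phi> 0 (V (xs ! i))\<bar> < d / 2"
      using \<open>0 < d\<close> unfolding continuous_within tendsto_iff dist_real_def
      by (metis half_gt_zero)
  qed simp
  then obtain e' where "0 < e'" and e': "\<And>t. t \<in> {0..T} \<Longrightarrow> t \<noteq> 0 \<Longrightarrow> dist t 0 < e' \<Longrightarrow>
      \<forall>i\<in>{..<length xs}. \<bar>\<phi> t (V (xs ! i)) - \<phi> 0 (V (xs ! i))\<bar> < d / 2"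
    unfolding eventually_at by blast
  show ?thesis
  proof (rule that[of "min (e' / 2) T"])
    fix t assume t: "t \<in> {0..min (e' / 2) T}"
    have "max_dist (length xs) (\<lambda>i. \<phi> t (V (xs ! i))) (\<lambda>i. \<phi> 0 (V (xs ! i))) \<le> d / 2"
    proof (cases "t = 0")
      case False
      then show ?thesis using e'[of t] t \<open>0 < e'\<close> \<open>0 < d\<close> by (intro max_dist_le) force+
    qed (use \<open>0 < d\<close> in simp)
    then show "max_dist (length xs) (\<lambda>i. \<phi> t (V (xs ! i))) (\<lambda>i. \<phi> 0 (V (xs ! i))) < d"
      using \<open>0 < d\<close> by simp
  qed (use \<open>0 < e'\<close> \<open>0 < T\<close> in auto)
qed

lemma tsem_solution_assign:
  assumes s: "solution \<phi> T Q" and \<zeta>: "\<zeta> \<in> {0..T}" and t: "t \<in> set fs"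
    and agree: "\<And>x. V x \<in> tvars t \<Longrightarrow> x \<notin> set xs \<Longrightarrow> \<nu> (V x) = \<phi> 0 (V x)"
  shows "tsem I t (\<phi> \<zeta>) = tsem I t (assign (map V xs) (\<lambda>j. \<phi> \<zeta> (V (xs ! j))) \<nu>)"
proof (rule tsem_agree_dfree)
  show "dfree t" using fs_wf_dfree t by blast
  fix x assume x: "V x \<in> tvars t"
  show "\<phi> \<zeta> (V x) = assign (map V xs) (\<lambda>j. \<phi> \<zeta> (V (xs ! j))) \<nu> (V x)"
  proof (cases "x \<in> set xs")
    case True
    then obtain j where "j < length xs" "x = xs ! j" by (auto simp: in_set_conv_nth)
    moreover have "distinct (map V xs)" using distinct_xs by (simp add: distinct_map inj_on_def)
    ultimately show ?thesis using assign_nth[of "map V xs" j] by simp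
  next
    case False
    then have "V x \<notin> set (map V xs)" "V x \<notin> V ` set xs" "V x \<notin> D ` set xs" by auto
    then show ?thesis using assign_notin agree[OF x False] solution_const[OF s \<zeta>] by simp
  qed
qed

lemma fs_locally_lipschitz:
  "i < length xs \<Longrightarrow> locally_lipschitz (length xs) (\<lambda>z. tsem I (fs ! i) (assign (map V xs) z \<nu>))"
  using tsem_locally_lipschitz[OF smooth_I, of "fs ! i" "map V xs"] fs_wf_dfree length_fs by simp

lemma solution_unique_local:
  assumes s1: "solution \<phi> T\<^sub>1 Q\<^sub>1" and s2: "solution \<psi> T\<^sub>2 Q\<^sub>2" and "0 < T\<^sub>1" "0 < T\<^sub>2"
    and same_x: "\<And>i. i < length xs \<Longrightarrow> \<phi> 0 (V (xs ! i)) = \<psi> 0 (V (xs ! i))"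
    and same_params: "\<And>t x. t \<in> set fs \<Longrightarrow> V x \<in> tvars t \<Longrightarrow> \<phi> 0 (V x) = \<psi> 0 (V x)"
  obtains e where "0 < e" "e \<le> T\<^sub>1" "e \<le> T\<^sub>2"
    "\<And>s i. s \<in> {0..e} \<Longrightarrow> i < length xs \<Longrightarrow> \<phi> s (V (xs ! i)) = \<psi> s (V (xs ! i))"
proof -
  define n where "n = length xs"
  define u where "u = (\<lambda>s i. \<phi> s (V (xs ! i)))"
  define v where "v = (\<lambda>s i. \<psi> s (V (xs ! i)))"
  define G where "G = (\<lambda>i z. tsem I (fs ! i) (assign (map V xs) z (\<phi> 0)))"
  have "\<forall>i<n. locally_lipschitz n (G i)"
    using fs_locally_lipschitz by (simp add: G_def n_def)
  then obtain d L where "0 < d" "0 \<le> L" and lip: "\<forall>i<n. lipschitz_near n (G i) (u 0) d L"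
    using locally_lipschitz_uniform by blast
  obtain e\<^sub>1 where "0 < e\<^sub>1" "e\<^sub>1 \<le> T\<^sub>1" and near\<^sub>1: "\<And>t. t \<in> {0..e\<^sub>1} \<Longrightarrow> max_dist n (u t) (u 0) < d"
    using solution_stays_near_start[OF s1 \<open>0 < T\<^sub>1\<close> \<open>0 < d\<close>] unfolding u_def n_def by blast
  obtain e\<^sub>2 where "0 < e\<^sub>2" "e\<^sub>2 \<le> T\<^sub>2" and near\<^sub>2: "\<And>t. t \<in> {0..e\<^sub>2} \<Longrightarrow> max_dist n (v t) (u 0) < d"
    using solution_stays_near_start[OF s2 \<open>0 < T\<^sub>2\<close> \<open>0 < d\<close>] same_x
      max_dist_cong[of n "v _" "v _" "v 0" "u 0"] unfolding u_def v_def n_def by metis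
  define e where "e = min e\<^sub>1 e\<^sub>2"
  have ode\<^sub>1: "\<phi> s (D (xs ! i)) = G i (u s)" if "s \<in> {0..T\<^sub>1}" "i < n" for s i
    using solution_ode[OF s1 that[unfolded n_def]] tsem_solution_assign[OF s1 that(1), of "fs ! i" "\<phi> 0"]
      that length_fs by (simp add: G_def u_def n_def)
  have ode\<^sub>2: "\<psi> s (D (xs ! i)) = G i (v s)" if "s \<in> {0..T\<^sub>2}" "i < n" for s i
    using solution_ode[OF s2 that[unfolded n_def]] tsem_solution_assign[OF s2 that(1), of "fs ! i" "\<phi> 0"]
      that length_fs same_params by (simp add: G_def v_def n_def)
  have "u s i = v s i" if "s \<in> {0..e}" "i < n" for s i
  proof (rule lipschitz_ode_unique[where u = u and v = v and F = G and L = L and e = e and n = n])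
    fix s i assume s: "s \<in> {0..e}" and i: "i < n"
    have s1': "s \<in> {0..T\<^sub>1}" and s2': "s \<in> {0..T\<^sub>2}"
      using s \<open>e\<^sub>1 \<le> T\<^sub>1\<close> \<open>e\<^sub>2 \<le> T\<^sub>2\<close> by (auto simp: e_def)
    show "((\<lambda>t. u t i) has_real_derivative G i (u s)) (at s within {0..e})"
      using solution_deriv[OF s1 s1', of i] ode\<^sub>1[OF s1' i] i \<open>e\<^sub>1 \<le> T\<^sub>1\<close>
      by (auto simp: u_def n_def e_def intro: DERIV_subset)
    show "((\<lambda>t. v t i) has_real_derivative G i (v s)) (at s within {0..e})"
      using solution_deriv[OF s2 s2', of i] ode\<^sub>2[OF s2' i] i \<open>e\<^sub>2 \<le> T\<^sub>2\<close>
      by (auto simp: v_def n_def e_def intro: DERIV_subset)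
    show "\<bar>G i (u s) - G i (v s)\<bar> \<le> L * max_dist n (u s) (v s)"
      using lip i near\<^sub>1[of s] near\<^sub>2[of s] s unfolding lipschitz_near_def e_def by auto
  qed (use that same_x \<open>0 \<le> L\<close> in \<open>auto simp: u_def v_def n_def\<close>)
  then show ?thesis
    using that[of e] \<open>0 < e\<^sub>1\<close> \<open>0 < e\<^sub>2\<close> \<open>e\<^sub>1 \<le> T\<^sub>1\<close> \<open>e\<^sub>2 \<le> T\<^sub>2\<close>
    by (auto simp: e_def u_def v_def n_def)
qed

lemma solution_exists:
  obtains h \<phi> where "h > 0" "\<And>v. v \<notin> D ` set xs \<Longrightarrow> \<phi> 0 v = \<nu> v" "solution \<phi> h (\<lambda>_. True)"
proof -
  define G where "G = (\<lambda>i z. tsem I (fs ! i) (assign (map V xs) z \<nu>))"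
  have "\<forall>i<length xs. locally_lipschitz (length xs) (G i)"
    using fs_locally_lipschitz by (simp add: G_def)
  then obtain h u where "h > 0" and u0: "\<And>i. i < length xs \<Longrightarrow> u 0 i = \<nu> (V (xs ! i))"
    and u: "\<And>t i. t \<in> {0..h} \<Longrightarrow> i < length xs \<Longrightarrow>
      ((\<lambda>t. u t i) has_real_derivative G i (u t)) (at t within {0..h})"
    by (rule lipschitz_coordinate_ode_exists) (rule that)
  define \<phi> where "\<phi> = (\<lambda>t. assign (map D xs) (\<lambda>i. G i (u t)) (assign (map V xs) (u t) \<nu>))"
  have dist_V: "distinct (map V xs)" and dist_D: "distinct (map D xs)"
    using distinct_xs by (simp_all add: distinct_map inj_on_def)
  have \<phi>_V: "\<phi> t (V (xs ! i)) = u t i" if "i < length xs" for t i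
    using that assign_nth[OF dist_V, of i] by (simp add: \<phi>_def assign_notin)
  have \<phi>_D: "\<phi> t (D (xs ! i)) = G i (u t)" if "i < length xs" for t i
    using that assign_nth[OF dist_D, of i] by (simp add: \<phi>_def)
  have \<phi>_other: "\<phi> t v = \<nu> v" if "v \<notin> V ` set xs" "v \<notin> D ` set xs" for t v
    using that by (simp add: \<phi>_def assign_notin)
  have tsem_\<phi>: "tsem I (fs ! i) (\<phi> t) = G i (u t)" if "i < length xs" for t i
    unfolding G_def using that fs_wf_dfree length_fs
    by (intro tsem_agree_dfree) (auto simp: \<phi>_def assign_notin)
  show ?thesis
  proof (rule that[OF \<open>h > 0\<close>])
    fix v assume v: "v \<notin> D ` set xs"
    show "\<phi> 0 v = \<nu> v"
    proof (cases "v \<in> V ` set xs")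
      case True
      then obtain i where "i < length xs" "v = V (xs ! i)" by (auto simp: in_set_conv_nth)
      then show ?thesis using \<phi>_V u0 by simp
    qed (use \<phi>_other v in auto)
  next
    show "solution \<phi> h (\<lambda>_. True)"
    proof (rule solutionI)
      fix \<zeta> i assume "\<zeta> \<in> {0..h}" "i < length xs"
      then show "\<phi> \<zeta> (D (xs ! i)) = tsem I (fs ! i) (\<phi> \<zeta>)"
        and "((\<lambda>t. \<phi> t (V (xs ! i))) has_real_derivative \<phi> \<zeta> (D (xs ! i))) (at \<zeta> within {0..h})"
        using \<phi>_D \<phi>_V tsem_\<phi> u by simp_all
    qed (simp_all add: \<phi>_other)
  qed
qed

lemma box_along_solution:
  assumes "box (ode_rel I xs fs (\<lambda>_. True)) R \<omega>" and s: "solution \<phi> T Q"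
    and "\<And>v. v \<notin> D ` set xs \<Longrightarrow> \<phi> 0 v = \<omega> v" and \<zeta>: "\<zeta> \<in> {0..T}"
  shows "R (\<phi> \<zeta>)"
proof -
  have "solution \<phi> \<zeta> (\<lambda>_. True)"
    using \<zeta> by (intro solution_weaken_domain[OF solution_restrict[OF s]]) auto
  then have "ode_rel I xs fs (\<lambda>_. True) \<omega> (\<phi> \<zeta>)"
    unfolding ode_rel_iff_solution using assms(3) \<zeta> by auto
  then show ?thesis using assms(1) unfolding box_def by blast
qed

end

subsection \<open>The local progress characterisation of \<open>[x' = f(x)] P\<close>\<close>

locale ode_progress = ode_system +
  fixes P :: fml and ys :: "ident list"
  assumes evolves: "\<forall>\<nu>. \<exists>i<length xs. tsem I (fs ! i) \<nu> \<noteq> 0"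
    and semianalytic_P: "semianalytic ar P"
    and distinct_ys: "distinct ys"
    and length_ys: "length ys = length xs"
    and ys_fresh: "\<forall>y\<in>set ys. y \<notin> set xs \<and> V y \<notin> fvars P \<and> (\<forall>t\<in>set fs. V y \<notin> tvars t)"
begin

lemma ys_outside_ode:
  "y \<in> V ` set ys \<Longrightarrow> y \<notin> V ` set xs \<and> y \<notin> D ` set xs \<and> (\<forall>t\<in>set fs. y \<notin> tvars t)"
  using ys_fresh by auto

lemma fsem_P_ignores_ys: "(\<And>v. v \<notin> V ` set ys \<Longrightarrow> s\<^sub>1 v = s\<^sub>2 v) \<Longrightarrow> fsem I P s\<^sub>1 = fsem I P s\<^sub>2"
  using ys_fresh by (intro fsem_agree_semianalytic[OF semianalytic_P]) auto

lemma box_along_solution_ys_variant: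
  assumes box: "box (ode_rel I xs fs (\<lambda>_. True)) (fsem I P) \<omega>"
    and \<omega>': "\<And>v. v \<notin> V ` set ys \<Longrightarrow> \<omega>' v = \<omega> v"
    and s: "solution \<phi> T Q" and init: "\<And>v. v \<notin> D ` set xs \<Longrightarrow> \<phi> 0 v = \<omega>' v"
    and \<zeta>: "\<zeta> \<in> {0..T}"
  shows "fsem I P (\<phi> \<zeta>)"
proof -
  \<comment> \<open>resetting the fresh variables turns \<open>\<phi>\<close> into a solution starting in \<open>\<omega>\<close>\<close>
  define \<phi>' where "\<phi>' = (\<lambda>\<zeta> v. if v \<in> V ` set ys then \<omega> v else \<phi> \<zeta> v)"
  have "solution \<phi>' T (\<lambda>_. True)"
    unfolding \<phi>'_def by (rule solution_frame[OF s ys_outside_ode]) auto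
  moreover have "\<phi>' 0 v = \<omega> v" if "v \<notin> D ` set xs" for v
    using init[OF that] \<omega>' by (simp add: \<phi>'_def)
  ultimately have "fsem I P (\<phi>' \<zeta>)" using box_along_solution[OF box _ _ \<zeta>] by blast
  moreover have "fsem I P (\<phi>' \<zeta>) = fsem I P (\<phi> \<zeta>)" by (rule fsem_P_ignores_ys) (simp add: \<phi>'_def)
  ultimately show ?thesis by simp
qed

lemma box_continuation:
  assumes box: "box (ode_rel I xs fs (\<lambda>_. True)) (fsem I P) \<omega>"
    and \<omega>': "\<forall>v. v \<notin> V ` set ys \<longrightarrow> \<omega>' v = \<omega> v"
    and s: "solution \<phi> T Q" and init: "\<forall>v. v \<notin> D ` set xs \<longrightarrow> \<phi> 0 v = \<omega>' v" and "0 \<le> T"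
  obtains h \<psi> where "0 < h" "\<psi> 0 = \<phi> T" "solution \<psi> h (fsem I P)"
proof -
  obtain h \<psi> where "h > 0" and init_\<psi>: "\<And>v. v \<notin> D ` set xs \<Longrightarrow> \<psi> 0 v = \<phi> T v"
    and s\<psi>: "solution \<psi> h (\<lambda>_. True)"
    using solution_exists by blast
  have "\<psi> 0 = \<phi> T"
    using solution_initial_state[OF s\<psi> _ init_\<psi>] solution_ode[OF s] \<open>0 \<le> T\<close> \<open>h > 0\<close> by auto
  \<comment> \<open>\<open>\<psi>\<close> continues the run from \<open>\<omega>'\<close>, so \<open>P\<close> holds along it\<close>
  have "fsem I P (\<psi> t)" if "t \<in> {0..h}" for t
  proof -
    have "solution (\<lambda>t. if t \<le> T then \<phi> t else \<psi> (t - T)) (T + h) (\<lambda>_. True)"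
      using \<open>\<psi> 0 = \<phi> T\<close> \<open>0 \<le> T\<close> \<open>h > 0\<close>
      by (intro solution_append solution_weaken_domain[OF s] s\<psi>) auto
    from box_along_solution_ys_variant[OF box _ this, of \<omega>' "T + t"]
    have "fsem I P (if T + t \<le> T then \<phi> (T + t) else \<psi> (T + t - T))"
      using \<omega>' init that \<open>0 \<le> T\<close> by auto
    then show ?thesis using \<open>\<psi> 0 = \<phi> T\<close> that by (cases "t = 0") auto
  qed
  then show ?thesis
    using that[of h \<psi>] \<open>h > 0\<close> \<open>\<psi> 0 = \<phi> T\<close> solution_weaken_domain[OF s\<psi>] by blast
qed

lemma box_imp_progress:
  assumes box: "box (ode_rel I xs fs (\<lambda>_. True)) (fsem I P) \<omega>"
    and \<omega>': "\<forall>v. v \<notin> V ` set ys \<longrightarrow> \<omega>' v = \<omega> v"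
  shows "box (ode_rel I xs fs (\<lambda>\<nu>. fsem I P \<nu> \<or> veq xs ys \<nu>))
           (\<lambda>\<nu>. veq xs ys \<nu> \<longrightarrow> fsem I P \<nu> \<and>
              dia (ode_rel I xs fs (\<lambda>\<mu>. fsem I P \<mu> \<or> veq xs ys \<mu>)) (\<lambda>\<mu>. \<not> veq xs ys \<mu>) \<nu>) \<omega>'"
  unfolding box_def
proof (intro allI impI conjI)
  fix \<nu> assume run: "ode_rel I xs fs (\<lambda>\<nu>. fsem I P \<nu> \<or> veq xs ys \<nu>) \<omega>' \<nu>" and eq: "veq xs ys \<nu>"
  obtain T \<phi> where "T \<ge> 0" and init: "\<forall>v. v \<notin> D ` set xs \<longrightarrow> \<phi> 0 v = \<omega>' v" and "\<phi> T = \<nu>"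
    and s: "solution \<phi> T (\<lambda>\<nu>. fsem I P \<nu> \<or> veq xs ys \<nu>)"
    using run unfolding ode_rel_iff_solution by blast
  show "fsem I P \<nu>"
    using box_along_solution_ys_variant[OF box _ s, of \<omega>' T] \<omega>' init \<open>\<phi> T = \<nu>\<close> \<open>T \<ge> 0\<close> by auto
  obtain h \<psi> where "0 < h" "\<psi> 0 = \<nu>" and s\<psi>: "solution \<psi> h (fsem I P)"
    using box_continuation[OF box \<omega>' s init \<open>T \<ge> 0\<close>] \<open>\<phi> T = \<nu>\<close> by blast
  obtain i where i: "i < length xs" "tsem I (fs ! i) (\<psi> 0) \<noteq> 0" using evolves by blast
  obtain \<epsilon> where "\<epsilon> > 0"
    and escape: "\<And>t. 0 < t \<Longrightarrow> t < \<epsilon> \<Longrightarrow> 0 + t \<le> h \<Longrightarrow> \<psi> (0 + t) (V (xs ! i)) \<noteq> \<psi> 0 (V (xs ! i))"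
    using solution_escape[OF s\<psi> _ \<open>0 < h\<close> i] by auto
  define t where "t = min (\<epsilon> / 2) h"
  have t: "0 < t" "t < \<epsilon>" "t \<le> h" using \<open>\<epsilon> > 0\<close> \<open>0 < h\<close> by (auto simp: t_def)
  have "\<not> veq xs ys (\<psi> t)"
  proof
    assume "veq xs ys (\<psi> t)"
    then have "\<psi> t (V (xs ! i)) = \<psi> t (V (ys ! i))" using i unfolding veq_def by blast
    also have "\<dots> = \<psi> 0 (V (ys ! i))"
      using ys_outside_ode[of "V (ys ! i)"] i(1) length_ys t
      by (intro solution_const[OF s\<psi>]) auto
    also have "\<dots> = \<psi> 0 (V (xs ! i))" using eq i \<open>\<psi> 0 = \<nu>\<close> unfolding veq_def by simp
    finally show False using escape t by simp
  qed
  moreover have "solution \<psi> t (\<lambda>\<mu>. fsem I P \<mu> \<or> veq xs ys \<mu>)"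
    by (rule solution_weaken_domain[OF solution_restrict[OF s\<psi>]]) (use solution_domain[OF s\<psi>] t in auto)
  then have "ode_rel I xs fs (\<lambda>\<mu>. fsem I P \<mu> \<or> veq xs ys \<mu>) \<nu> (\<psi> t)"
    unfolding ode_rel_iff_solution using \<open>\<psi> 0 = \<nu>\<close> t by (intro exI[of _ t] conjI exI[of _ \<psi>]) auto
  ultimately show "dia (ode_rel I xs fs (\<lambda>\<mu>. fsem I P \<mu> \<or> veq xs ys \<mu>)) (\<lambda>\<mu>. \<not> veq xs ys \<mu>) \<nu>"
    unfolding dia_def by blast
qed

lemma assign_ys_nth: "i < length xs \<Longrightarrow> assign (map V ys) z \<omega> (V (ys ! i)) = z i"
  using assign_nth[of "map V ys" i] distinct_ys length_ys by (simp add: distinct_map inj_on_def)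

lemma run_to_diagonal:
  assumes s: "solution \<phi> T (\<lambda>_. True)" and init: "\<And>v. v \<notin> D ` set xs \<Longrightarrow> \<phi> 0 v = \<omega> v"
    and t\<^sub>0: "t\<^sub>0 \<in> {0..T}" and below: "\<And>r. r \<in> {0..<t\<^sub>0} \<Longrightarrow> fsem I P (\<phi> r)"
  defines "\<omega>' \<equiv> assign (map V ys) (\<lambda>i. \<phi> t\<^sub>0 (V (xs ! i))) \<omega>"
  shows "veq xs ys (\<lambda>v. if v \<in> V ` set ys then \<omega>' v else \<phi> t\<^sub>0 v)"
    and "ode_rel I xs fs (\<lambda>\<nu>. fsem I P \<nu> \<or> veq xs ys \<nu>) \<omega>' (\<lambda>v. if v \<in> V ` set ys then \<omega>' v else \<phi> t\<^sub>0 v)"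
proof -
  have xs_not_ys: "V (xs ! i) \<notin> V ` set ys" if "i < length xs" for i
    using ys_outside_ode nth_mem[OF that] by blast
  show eq: "veq xs ys (\<lambda>v. if v \<in> V ` set ys then \<omega>' v else \<phi> t\<^sub>0 v)"
    unfolding veq_def \<omega>'_def using xs_not_ys assign_ys_nth length_ys by simp
  have "solution (\<lambda>\<zeta> v. if v \<in> V ` set ys then \<omega>' v else \<phi> \<zeta> v) t\<^sub>0 (\<lambda>\<nu>. fsem I P \<nu> \<or> veq xs ys \<nu>)"
  proof (rule solution_frame[OF solution_restrict[OF s] ys_outside_ode])
    fix \<zeta> assume \<zeta>: "\<zeta> \<in> {0..t\<^sub>0}"
    show "fsem I P (\<lambda>v. if v \<in> V ` set ys then \<omega>' v else \<phi> \<zeta> v) \<or>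
        veq xs ys (\<lambda>v. if v \<in> V ` set ys then \<omega>' v else \<phi> \<zeta> v)"
    proof (cases "\<zeta> = t\<^sub>0")
      case False
      then have "fsem I P (\<phi> \<zeta>)" using below \<zeta> by simp
      then show ?thesis using fsem_P_ignores_ys[of "\<lambda>v. if v \<in> V ` set ys then \<omega>' v else \<phi> \<zeta> v"] by simp
    next
      case True
      show ?thesis using eq unfolding True by blast
    qed
  qed (use t\<^sub>0 in auto)
  moreover have "(if v \<in> V ` set ys then \<omega>' v else \<phi> 0 v) = \<omega>' v" if "v \<notin> D ` set xs" for v
    using init[OF that] by (simp add: \<omega>'_def assign_notin)
  ultimately show "ode_rel I xs fs (\<lambda>\<nu>. fsem I P \<nu> \<or> veq xs ys \<nu>) \<omega>'
      (\<lambda>v. if v \<in> V ` set ys then \<omega>' v else \<phi> t\<^sub>0 v)"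
    unfolding ode_rel_iff_solution using t\<^sub>0
    by (intro exI[of _ t\<^sub>0] conjI exI[of _ "\<lambda>\<zeta> v. if v \<in> V ` set ys then \<omega>' v else \<phi> \<zeta> v"]) auto
qed

lemma progress_at:
  assumes rhs: "\<forall>\<omega>'. (\<forall>v. v \<notin> V ` set ys \<longrightarrow> \<omega>' v = \<omega> v) \<longrightarrow>
      box (ode_rel I xs fs (\<lambda>\<nu>. fsem I P \<nu> \<or> veq xs ys \<nu>))
        (\<lambda>\<nu>. veq xs ys \<nu> \<longrightarrow> fsem I P \<nu> \<and>
           dia (ode_rel I xs fs (\<lambda>\<mu>. fsem I P \<mu> \<or> veq xs ys \<mu>)) (\<lambda>\<mu>. \<not> veq xs ys \<mu>) \<nu>) \<omega>'"
    and s: "solution \<phi> T (\<lambda>_. True)" and init: "\<And>v. v \<notin> D ` set xs \<Longrightarrow> \<phi> 0 v = \<omega> v"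
    and t\<^sub>0: "t\<^sub>0 \<in> {0..T}" and below: "\<And>r. r \<in> {0..<t\<^sub>0} \<Longrightarrow> fsem I P (\<phi> r)"
  obtains T' \<psi> where "fsem I P (\<phi> t\<^sub>0)" "0 < T'" "solution \<psi> T' (\<lambda>\<mu>. fsem I P \<mu> \<or> veq xs ys \<mu>)"
    "\<forall>v. v \<notin> D ` set xs \<longrightarrow> v \<notin> V ` set ys \<longrightarrow> \<psi> 0 v = \<phi> t\<^sub>0 v"
    "\<forall>i<length xs. \<psi> 0 (V (ys ! i)) = \<phi> t\<^sub>0 (V (xs ! i))"
proof -
  \<comment> \<open>choose \<open>y\<close> as the value of \<open>x\<close> at time \<open>t\<^sub>0\<close>, so the run up to \<open>t\<^sub>0\<close> ends on \<open>x = y\<close>\<close>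
  define \<omega>' where "\<omega>' = assign (map V ys) (\<lambda>i. \<phi> t\<^sub>0 (V (xs ! i))) \<omega>"
  define \<mu>\<^sub>0 where "\<mu>\<^sub>0 = (\<lambda>v. if v \<in> V ` set ys then \<omega>' v else \<phi> t\<^sub>0 v)"
  have eq: "veq xs ys \<mu>\<^sub>0" and run: "ode_rel I xs fs (\<lambda>\<nu>. fsem I P \<nu> \<or> veq xs ys \<nu>) \<omega>' \<mu>\<^sub>0"
    using run_to_diagonal[OF s init t\<^sub>0 below] unfolding \<omega>'_def \<mu>\<^sub>0_def by blast+
  have "\<forall>v. v \<notin> V ` set ys \<longrightarrow> \<omega>' v = \<omega> v" by (simp add: \<omega>'_def assign_notin)
  then have "fsem I P \<mu>\<^sub>0" and "dia (ode_rel I xs fs (\<lambda>\<mu>. fsem I P \<mu> \<or> veq xs ys \<mu>)) (\<lambda>\<mu>. \<not> veq xs ys \<mu>) \<mu>\<^sub>0"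
    using rhs run eq unfolding box_def by blast+
  then obtain \<mu> T' \<psi> where P: "fsem I P (\<phi> t\<^sub>0)" and "\<not> veq xs ys \<mu>" "0 \<le> T'" "\<psi> T' = \<mu>"
    and init\<^sub>\<psi>: "\<And>v. v \<notin> D ` set xs \<Longrightarrow> \<psi> 0 v = \<mu>\<^sub>0 v"
    and s\<psi>: "solution \<psi> T' (\<lambda>\<mu>. fsem I P \<mu> \<or> veq xs ys \<mu>)"
    unfolding dia_def ode_rel_iff_solution
    using fsem_P_ignores_ys[of \<mu>\<^sub>0 "\<phi> t\<^sub>0"] by (auto simp: \<mu>\<^sub>0_def)
  have "T' \<noteq> 0"
  proof
    assume "T' = 0"
    then have "veq xs ys \<mu>" using eq init\<^sub>\<psi> \<open>\<psi> T' = \<mu>\<close> by (simp add: veq_def)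
    then show False using \<open>\<not> veq xs ys \<mu>\<close> by simp
  qed
  show ?thesis
  proof (rule that[OF P _ s\<psi>])
    show "0 < T'" using \<open>0 \<le> T'\<close> \<open>T' \<noteq> 0\<close> by simp
    show "\<forall>v. v \<notin> D ` set xs \<longrightarrow> v \<notin> V ` set ys \<longrightarrow> \<psi> 0 v = \<phi> t\<^sub>0 v"
      using init\<^sub>\<psi> by (simp add: \<mu>\<^sub>0_def)
    show "\<forall>i<length xs. \<psi> 0 (V (ys ! i)) = \<phi> t\<^sub>0 (V (xs ! i))"
      using init\<^sub>\<psi> assign_ys_nth length_ys by (simp add: \<mu>\<^sub>0_def \<omega>'_def)
  qed
qed

lemma continuation_agrees:
  assumes s: "solution \<phi> T Q" and s\<psi>: "solution \<psi> T' Q'" and "0 \<le> t\<^sub>0" "t\<^sub>0 < T" "0 < T'"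
    and \<psi>_other: "\<forall>v. v \<notin> D ` set xs \<longrightarrow> v \<notin> V ` set ys \<longrightarrow> \<psi> 0 v = \<phi> t\<^sub>0 v"
  obtains e where "0 < e" "e \<le> T - t\<^sub>0" "e \<le> T'"
    "\<forall>t\<in>{0..e}. \<forall>i<length xs. \<phi> (t + t\<^sub>0) (V (xs ! i)) = \<psi> t (V (xs ! i))"
    "\<forall>t\<in>{0..e}. fsem I P (\<phi> (t + t\<^sub>0)) = fsem I P (\<psi> t)"
proof -
  have xs_not_ys: "V (xs ! i) \<notin> V ` set ys" if "i < length xs" for i
    using ys_outside_ode nth_mem[OF that] by blast
  obtain e where "0 < e" "e \<le> T - t\<^sub>0" "e \<le> T'"
    and same: "\<And>t i. t \<in> {0..e} \<Longrightarrow> i < length xs \<Longrightarrow> \<phi> (t + t\<^sub>0) (V (xs ! i)) = \<psi> t (V (xs ! i))"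
  proof (rule solution_unique_local[OF solution_shift[OF s \<open>0 \<le> t\<^sub>0\<close>] s\<psi> _ \<open>0 < T'\<close>])
    show "\<phi> (0 + t\<^sub>0) (V (xs ! i)) = \<psi> 0 (V (xs ! i))" if "i < length xs" for i
      using \<psi>_other xs_not_ys[OF that] by simp
    show "\<phi> (0 + t\<^sub>0) (V x) = \<psi> 0 (V x)" if "t \<in> set fs" "V x \<in> tvars t" for t x
    proof -
      have "V x \<notin> V ` set ys" using ys_outside_ode[of "V x"] that by blast
      then show ?thesis using \<psi>_other by simp
    qed
  qed (use \<open>t\<^sub>0 < T\<close> in auto)
  have "fsem I P (\<phi> (t + t\<^sub>0)) = fsem I P (\<psi> t)" if t: "t \<in> {0..e}" for t
  proof (rule fsem_agree_semianalytic[OF semianalytic_P])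
    fix x assume x: "V x \<in> fvars P"
    show "\<phi> (t + t\<^sub>0) (V x) = \<psi> t (V x)"
    proof (cases "x \<in> set xs")
      case True
      then obtain k where "k < length xs" "x = xs ! k" by (auto simp: in_set_conv_nth)
      then show ?thesis using same[OF t] by simp
    next
      case False
      have out: "V x \<notin> V ` set xs" "V x \<notin> V ` set ys"
        using False x ys_fresh by blast+
      have "t + t\<^sub>0 \<in> {0..T}" "t\<^sub>0 \<in> {0..T}" "t \<in> {0..T'}"
        using t \<open>0 \<le> t\<^sub>0\<close> \<open>t\<^sub>0 < T\<close> \<open>e \<le> T - t\<^sub>0\<close> \<open>e \<le> T'\<close> by auto
      then have "\<phi> (t + t\<^sub>0) (V x) = \<phi> t\<^sub>0 (V x)" "\<psi> t (V x) = \<psi> 0 (V x)"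
        using solution_const[OF s _ out(1)] solution_const[OF s\<psi> _ out(1)] by (metis V_notin_D_image)+
      then show ?thesis using \<psi>_other out(2) by simp
    qed
  qed
  then show ?thesis using that \<open>0 < e\<close> \<open>e \<le> T - t\<^sub>0\<close> \<open>e \<le> T'\<close> same by blast
qed

lemma progress_beyond:
  assumes rhs: "\<forall>\<omega>'. (\<forall>v. v \<notin> V ` set ys \<longrightarrow> \<omega>' v = \<omega> v) \<longrightarrow>
      box (ode_rel I xs fs (\<lambda>\<nu>. fsem I P \<nu> \<or> veq xs ys \<nu>))
        (\<lambda>\<nu>. veq xs ys \<nu> \<longrightarrow> fsem I P \<nu> \<and>
           dia (ode_rel I xs fs (\<lambda>\<mu>. fsem I P \<mu> \<or> veq xs ys \<mu>)) (\<lambda>\<mu>. \<not> veq xs ys \<mu>) \<nu>) \<omega>'"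
    and s: "solution \<phi> T (\<lambda>_. True)" and init: "\<And>v. v \<notin> D ` set xs \<Longrightarrow> \<phi> 0 v = \<omega> v"
    and "0 \<le> t\<^sub>0" "t\<^sub>0 < T" and below: "\<And>r. r \<in> {0..<t\<^sub>0} \<Longrightarrow> fsem I P (\<phi> r)"
  obtains \<delta> where "\<delta> > 0" "\<forall>r\<in>{t\<^sub>0<..<t\<^sub>0 + \<delta>}. fsem I P (\<phi> r)"
proof -
  have t\<^sub>0: "t\<^sub>0 \<in> {0..T}" using \<open>0 \<le> t\<^sub>0\<close> \<open>t\<^sub>0 < T\<close> by simp
  obtain T' \<psi> where "fsem I P (\<phi> t\<^sub>0)" "0 < T'"
    and s\<psi>: "solution \<psi> T' (\<lambda>\<mu>. fsem I P \<mu> \<or> veq xs ys \<mu>)"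
    and \<psi>_other: "\<forall>v. v \<notin> D ` set xs \<longrightarrow> v \<notin> V ` set ys \<longrightarrow> \<psi> 0 v = \<phi> t\<^sub>0 v"
    and \<psi>_ys: "\<forall>i<length xs. \<psi> 0 (V (ys ! i)) = \<phi> t\<^sub>0 (V (xs ! i))"
    using progress_at[OF rhs s init t\<^sub>0 below] by blast
  obtain e where "0 < e" "e \<le> T - t\<^sub>0" "e \<le> T'"
    and same_x: "\<forall>t\<in>{0..e}. \<forall>i<length xs. \<phi> (t + t\<^sub>0) (V (xs ! i)) = \<psi> t (V (xs ! i))"
    and same_P: "\<forall>t\<in>{0..e}. fsem I P (\<phi> (t + t\<^sub>0)) = fsem I P (\<psi> t)"
    using continuation_agrees[OF s s\<psi> \<open>0 \<le> t\<^sub>0\<close> \<open>t\<^sub>0 < T\<close> \<open>0 < T'\<close> \<psi>_other] by blast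
  obtain i where i: "i < length xs" "tsem I (fs ! i) (\<phi> t\<^sub>0) \<noteq> 0" using evolves by blast
  obtain \<epsilon> where "\<epsilon> > 0" and escape:
    "\<And>t. 0 < t \<Longrightarrow> t < \<epsilon> \<Longrightarrow> t\<^sub>0 + t \<le> T \<Longrightarrow> \<phi> (t\<^sub>0 + t) (V (xs ! i)) \<noteq> \<phi> t\<^sub>0 (V (xs ! i))"
    using solution_escape[OF s \<open>0 \<le> t\<^sub>0\<close> \<open>t\<^sub>0 < T\<close> i] by auto
  show ?thesis
  proof (rule that[of "min e \<epsilon>"])
    show "0 < min e \<epsilon>" using \<open>0 < e\<close> \<open>\<epsilon> > 0\<close> by simp
    show "\<forall>r\<in>{t\<^sub>0<..<t\<^sub>0 + min e \<epsilon>}. fsem I P (\<phi> r)"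
    proof
      fix r assume r: "r \<in> {t\<^sub>0<..<t\<^sub>0 + min e \<epsilon>}"
      define t where "t = r - t\<^sub>0"
      have t: "0 < t" "t < \<epsilon>" "t \<in> {0..e}" "t \<in> {0..T'}" "r = t + t\<^sub>0"
        using r \<open>e \<le> T'\<close> by (auto simp: t_def)
      \<comment> \<open>\<open>x\<close> has left its value at \<open>t\<^sub>0\<close>, which \<open>y\<close> keeps, so \<open>\<psi>\<close> can only stay in \<open>P\<close>\<close>
      have "\<psi> t (V (ys ! i)) = \<phi> t\<^sub>0 (V (xs ! i))"
        using solution_const[OF s\<psi> t(4), of "V (ys ! i)"] ys_outside_ode[of "V (ys ! i)"] \<psi>_ys i(1) length_ys
        by simp
      moreover have "\<psi> t (V (xs ! i)) \<noteq> \<phi> t\<^sub>0 (V (xs ! i))"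
      proof -
        have "\<phi> (t\<^sub>0 + t) (V (xs ! i)) \<noteq> \<phi> t\<^sub>0 (V (xs ! i))"
          using escape[of t] t \<open>e \<le> T - t\<^sub>0\<close> by simp
        moreover have "\<phi> (t + t\<^sub>0) (V (xs ! i)) = \<psi> t (V (xs ! i))"
          using same_x t(3) i(1) by blast
        ultimately show ?thesis by (simp add: add.commute)
      qed
      ultimately have "\<not> veq xs ys (\<psi> t)" using i(1) unfolding veq_def by auto
      then have "fsem I P (\<psi> t)" using solution_domain[OF s\<psi> t(4)] by simp
      then show "fsem I P (\<phi> r)" using same_P t(3) t(5) by simp
    qed
  qed
qed

lemma progress_imp_box:
  assumes rhs: "\<forall>\<omega>'. (\<forall>v. v \<notin> V ` set ys \<longrightarrow> \<omega>' v = \<omega> v) \<longrightarrow>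
      box (ode_rel I xs fs (\<lambda>\<nu>. fsem I P \<nu> \<or> veq xs ys \<nu>))
        (\<lambda>\<nu>. veq xs ys \<nu> \<longrightarrow> fsem I P \<nu> \<and>
           dia (ode_rel I xs fs (\<lambda>\<mu>. fsem I P \<mu> \<or> veq xs ys \<mu>)) (\<lambda>\<mu>. \<not> veq xs ys \<mu>) \<nu>) \<omega>'"
  shows "box (ode_rel I xs fs (\<lambda>_. True)) (fsem I P) \<omega>"
  unfolding box_def
proof (intro allI impI)
  fix \<nu> assume "ode_rel I xs fs (\<lambda>_. True) \<omega> \<nu>"
  then obtain T \<phi> where "T \<ge> 0" and init: "\<And>v. v \<notin> D ` set xs \<Longrightarrow> \<phi> 0 v = \<omega> v" and "\<phi> T = \<nu>"
    and s: "solution \<phi> T (\<lambda>_. True)"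
    unfolding ode_rel_iff_solution by blast
  have "fsem I P (\<phi> t)" if "t \<in> {0..T}" for t
  proof (rule real_induction[OF _ that])
    fix t\<^sub>0 assume t\<^sub>0: "t\<^sub>0 \<in> {0..T}" and below: "\<And>r. r \<in> {0..<t\<^sub>0} \<Longrightarrow> fsem I P (\<phi> r)"
    show "fsem I P (\<phi> t\<^sub>0) \<and> (t\<^sub>0 < T \<longrightarrow> (\<exists>\<delta>>0. \<forall>r\<in>{t\<^sub>0<..<t\<^sub>0 + \<delta>}. fsem I P (\<phi> r)))"
    proof
      show "fsem I P (\<phi> t\<^sub>0)" using progress_at[OF rhs s init t\<^sub>0 below] by blast
      show "t\<^sub>0 < T \<longrightarrow> (\<exists>\<delta>>0. \<forall>r\<in>{t\<^sub>0<..<t\<^sub>0 + \<delta>}. fsem I P (\<phi> r))"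
      proof
        assume "t\<^sub>0 < T"
        moreover have "0 \<le> t\<^sub>0" using t\<^sub>0 by simp
        ultimately show "\<exists>\<delta>>0. \<forall>r\<in>{t\<^sub>0<..<t\<^sub>0 + \<delta>}. fsem I P (\<phi> r)"
          using progress_beyond[OF rhs s init _ _ below] by blast
      qed
    qed
  qed
  then show "fsem I P \<nu>" using \<open>T \<ge> 0\<close> \<open>\<phi> T = \<nu>\<close> by auto
qed

end

theorem lemma5p5:
  fixes I :: "nat \<Rightarrow> real list \<Rightarrow> real" and ar :: "nat \<Rightarrow> nat"
    and xs ys :: "ident list" and fs :: "trm list" and P :: fml
  assumes smoothI: "\<forall>g. smooth (ar g) (I g)"
    and xs_dist: "distinct xs"
    and fs_len: "length fs = length xs"
    and fs_terms: "\<forall>t\<in>set fs. wf_trm ar t \<and> dfree t"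
    and evolves: "\<forall>\<nu>. \<exists>i<length xs. tsem I (fs ! i) \<nu> \<noteq> 0"
    and P_sa: "semianalytic ar P"
    and ys_dist: "distinct ys"
    and ys_len: "length ys = length xs"
    and ys_fresh: "\<forall>y\<in>set ys. y \<notin> set xs \<and> V y \<notin> fvars P \<and> (\<forall>t\<in>set fs. V y \<notin> tvars t)"
  shows "\<forall>\<omega>. box (ode_rel I xs fs (\<lambda>_. True)) (fsem I P) \<omega> \<longleftrightarrow>
           (\<forall>\<omega>'. (\<forall>v. v \<notin> V ` set ys \<longrightarrow> \<omega>' v = \<omega> v) \<longrightarrow>
              box (ode_rel I xs fs (\<lambda>\<nu>. fsem I P \<nu> \<or> veq xs ys \<nu>))
                  (\<lambda>\<nu>. veq xs ys \<nu> \<longrightarrow>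
                        fsem I P \<nu> \<and>
                        dia (ode_rel I xs fs (\<lambda>\<mu>. fsem I P \<mu> \<or> veq xs ys \<mu>))
                            (\<lambda>\<mu>. \<not> veq xs ys \<mu>) \<nu>)
                  \<omega>')"
proof -
  interpret ode_progress I ar xs fs P ys
    using assms by unfold_locales
  show ?thesis
    by (intro allI iffI impI) (erule (1) box_imp_progress, erule progress_imp_box)
qed

end
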